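(* Let $A$ be a real symmetric matrix normalized so that every row and every column has $0$ as its minimal entry, and let $$A^{+}=\begin{pmatrix}0&\mathbf 0\\ \mathbf 0&A\end{pmatrix}$$ be obtained by adjoining a zero row and a zero column. Then: (1) if $A$ has symmetric tropical rank two, so does $A^{+}$; (2) if $A$ has symmetric Kapranov rank two, so does $A^{+}$.
   Context: Let $\tilde K$ be the field of Hahn series $\sum_{\alpha\in A}c_\alpha t^\alpha$ ($A\subset\mathbb R$ well-ordered, $c_\alpha\in\mathbb C$); for nonzero $a\in\tilde K$, $\deg(a)$ is the smallest exponent with nonzero coefficient. A symmetric lift of a real symmetric matrix $A$ is a symmetric matrix $\tilde A$ over $\tilde K$ with all entries nonzero and $\deg(\tilde a_{i,j})=A_{i,j}$; the symmetric Kapranov rank of $A$ is the minimum rank of a symmetric lift. For an $r\times r$ submatrix of $A$ with row index set $I$ and column index set $J$, each bijection $\rho:I\to J$ gives a monomial $\prod_{i\in I}X_{i,\rho(i)}$ in commuting variables subject to $X_{i,j}=X_{j,i}$, with value $\sum_{i\in I}A_{i,\rho(i)}$; the submatrix is symmetrically tropically singular if the minimum value is attained by at least two distinct monomials. The symmetric tropical rank of $A$ is the largest $r$ such that $A$ has an $r\times r$ submatrix that is not symmetrically tropically singular. *)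

theory Defs
  imports Complex_Main "HOL-Library.Multiset"
begin

text \<open>A Hahn series sum c_alpha t^alpha is represented by its coefficient
function real => complex; it is a Hahn series iff its support is well-ordered.\<close>

type_synonym hahn = "real \<Rightarrow> complex"

definition hsupp :: "hahn \<Rightarrow> real set" where
  "hsupp a = {\<alpha>. a \<alpha> \<noteq> 0}"

definition is_hahn :: "hahn \<Rightarrow> bool" where
  "is_hahn a \<longleftrightarrow> (\<forall>S. S \<subseteq> hsupp a \<longrightarrow> S \<noteq> {} \<longrightarrow> (\<exists>m\<in>S. \<forall>x\<in>S. m \<le> x))"

text \<open>Field operations: addition is pointwise, multiplication is the
Cauchy product (the index set is finite for Hahn series).\<close>

definition hmul :: "hahn \<Rightarrow> hahn \<Rightarrow> hahn" where
  "hmul a b = (\<lambda>\<gamma>. \<Sum>p\<in>{(\<alpha>, \<beta>). a \<alpha> \<noteq> 0 \<and> b \<beta> \<noteq> 0 \<and> \<alpha> + \<beta> = \<gamma>}.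
                     a (fst p) * b (snd p))"

definition hdeg :: "hahn \<Rightarrow> real" where
  "hdeg a = (LEAST \<alpha>. a \<alpha> \<noteq> 0)"

definition hrank_le :: "nat \<Rightarrow> (nat \<Rightarrow> nat \<Rightarrow> hahn) \<Rightarrow> nat \<Rightarrow> bool" where
  "hrank_le n L r \<longleftrightarrow> (\<exists>B C.
      (\<forall>i<n. \<forall>k<r. is_hahn (B i k)) \<and> (\<forall>k<r. \<forall>j<n. is_hahn (C k j)) \<and>
      (\<forall>i<n. \<forall>j<n. L i j = (\<lambda>\<gamma>. \<Sum>k<r. hmul (B i k) (C k j) \<gamma>)))"

definition hrank :: "nat \<Rightarrow> (nat \<Rightarrow> nat \<Rightarrow> hahn) \<Rightarrow> nat" where
  "hrank n L = (LEAST r. hrank_le n L r)"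

definition symmetric_mat :: "nat \<Rightarrow> (nat \<Rightarrow> nat \<Rightarrow> 'a) \<Rightarrow> bool" where
  "symmetric_mat n A \<longleftrightarrow> (\<forall>i<n. \<forall>j<n. A i j = A j i)"

definition sym_lift :: "nat \<Rightarrow> (nat \<Rightarrow> nat \<Rightarrow> real) \<Rightarrow> (nat \<Rightarrow> nat \<Rightarrow> hahn) \<Rightarrow> bool" where
  "sym_lift n A L \<longleftrightarrow> symmetric_mat n L \<and>
     (\<forall>i<n. \<forall>j<n. is_hahn (L i j) \<and> L i j \<noteq> (\<lambda>_. 0) \<and> hdeg (L i j) = A i j)"

definition sym_kapranov_rank :: "nat \<Rightarrow> (nat \<Rightarrow> nat \<Rightarrow> real) \<Rightarrow> nat" where
  "sym_kapranov_rank n A = (LEAST r. \<exists>L. sym_lift n A L \<and> hrank n L = r)"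

text \<open>Monomial of a bijection rho : I -> J: multiset of unordered pairs {i, rho i}
(commuting variables with X_ij = X_ji).\<close>

definition sym_monomial :: "nat set \<Rightarrow> (nat \<Rightarrow> nat) \<Rightarrow> nat set multiset" where
  "sym_monomial I \<rho> = image_mset (\<lambda>i. {i, \<rho> i}) (mset_set I)"

definition mono_value :: "(nat \<Rightarrow> nat \<Rightarrow> real) \<Rightarrow> nat set \<Rightarrow> (nat \<Rightarrow> nat) \<Rightarrow> real" where
  "mono_value A I \<rho> = (\<Sum>i\<in>I. A i (\<rho> i))"

definition sym_trop_singular :: "(nat \<Rightarrow> nat \<Rightarrow> real) \<Rightarrow> nat set \<Rightarrow> nat set \<Rightarrow> bool" where
  "sym_trop_singular A I J \<longleftrightarrow> (\<exists>\<rho>1 \<rho>2.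
      bij_betw \<rho>1 I J \<and> bij_betw \<rho>2 I J \<and>
      (\<forall>\<rho>. bij_betw \<rho> I J \<longrightarrow> mono_value A I \<rho>1 \<le> mono_value A I \<rho>) \<and>
      mono_value A I \<rho>2 = mono_value A I \<rho>1 \<and>
      sym_monomial I \<rho>1 \<noteq> sym_monomial I \<rho>2)"

definition sym_tropical_rank :: "nat \<Rightarrow> (nat \<Rightarrow> nat \<Rightarrow> real) \<Rightarrow> nat" where
  "sym_tropical_rank n A = (GREATEST r. \<exists>I J. I \<subseteq> {..<n} \<and> J \<subseteq> {..<n} \<and>
      card I = r \<and> card J = r \<and> \<not> sym_trop_singular A I J)"

definition normalized :: "nat \<Rightarrow> (nat \<Rightarrow> nat \<Rightarrow> real) \<Rightarrow> bool" where
  "normalized n A \<longleftrightarrow>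
     (\<forall>i<n. (\<forall>j<n. 0 \<le> A i j) \<and> (\<exists>j<n. A i j = 0)) \<and>
     (\<forall>j<n. (\<forall>i<n. 0 \<le> A i j) \<and> (\<exists>i<n. A i j = 0))"

definition aug :: "(nat \<Rightarrow> nat \<Rightarrow> real) \<Rightarrow> nat \<Rightarrow> nat \<Rightarrow> real" where
  "aug A i j = (if i = 0 \<or> j = 0 then 0 else A (i - 1) (j - 1))"

end

theory Submission
  imports Defs "HOL-Library.FuncSet" "HOL-Combinatorics.Transposition"
begin

(* A symmetric lift L of A that factors through rank r is bordered by the new row
   and column sum_m l_m L_mj and the corner sum_{m,m'} l_m l_m' L_mm'; the factorization extends,
   so the rank stays at most r. Normalization gives every entry of L nonnegative degree and every
   column an entry of degree 0, so for generic complex l the constant terms of the new entries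
   are nonzero and their degree is 0, as A^+ requires. Deleting row and column 0 of a lift of A^+
   gives a lift of A, hence the symmetric Kapranov ranks of A and A^+ agree.

   Nonsingular 2x2 minors of A stay nonsingular in A^+. Conversely, let sigma be
   an optimal bijection of a nonsingular 3x3 minor of A^+ that uses the zero row 0. Comparing
   sigma with its transpositions shows that the other rows of the minor are positive in column
   sigma(0), so a row r with a zero there (normalization) lies outside the minor, and putting
   row r in place of row 0 keeps the minor nonsingular unless another bijection realizes the
   monomial of sigma; then the minor is principal and index 0 is replaced by r in rows and
   columns at once. Using symmetry for the zero column, this yields a nonsingular 3x3 minor of
   A. *)

section \<open>Hahn series\<close>

lemma finite_if_min_and_max:
  fixes S :: "'a::linorder set"
  assumes min: "\<And>T. T \<subseteq> S \<Longrightarrow> T \<noteq> {} \<Longrightarrow> \<exists>m\<in>T. \<forall>x\<in>T. m \<le> x"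
    and max: "\<And>T. T \<subseteq> S \<Longrightarrow> T \<noteq> {} \<Longrightarrow> \<exists>m\<in>T. \<forall>x\<in>T. x \<le> m"
  shows "finite S"
proof (rule ccontr)
  assume "infinite S"
  then obtain s :: "nat \<Rightarrow> 'a" where s: "inj s" "range s \<subseteq> S"
    using infinite_iff_countable_subset[of S] by blast
  obtain f where f: "strict_mono f" "monoseq (s \<circ> f)"
    using seq_monosub[of s] unfolding comp_def by blast
  define t where "t = s \<circ> f"
  have "inj t"
    unfolding t_def using s(1) strict_mono_imp_inj_on[OF f(1)] by (rule inj_compose)
  have T: "range t \<subseteq> S" "range t \<noteq> {}"
    using s(2) by (auto simp: t_def)
  obtain k where "t (Suc k) \<le> t k" "t k \<le> t (Suc k)"
  proof (cases "mono t")
    case True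
    obtain k where "\<forall>x\<in>range t. x \<le> t k" using max[OF T] by blast
    then show thesis using that[of k] True by (simp add: monoD)
  next
    case False
    then have "antimono t" using f(2) by (auto simp: t_def monoseq_def mono_def antimono_def)
    obtain k where "\<forall>x\<in>range t. t k \<le> x" using min[OF T] by blast
    then show thesis using that[of k] \<open>antimono t\<close> by (simp add: antimonoD)
  qed
  then have "t (Suc k) = t k" by (rule order_antisym)
  with \<open>inj t\<close> show False by (simp add: inj_eq)
qed

definition hmul_pairs :: "hahn \<Rightarrow> hahn \<Rightarrow> real \<Rightarrow> (real \<times> real) set" where
  "hmul_pairs a b \<gamma> = {(\<alpha>, \<beta>). a \<alpha> \<noteq> 0 \<and> b \<beta> \<noteq> 0 \<and> \<alpha> + \<beta> = \<gamma>}"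

lemma hmul_eq_sum_pairs: "hmul a b \<gamma> = (\<Sum>p\<in>hmul_pairs a b \<gamma>. a (fst p) * b (snd p))"
  unfolding hmul_def hmul_pairs_def by simp

lemma finite_hmul_pairs:
  assumes "is_hahn a" "is_hahn b"
  shows "finite (hmul_pairs a b \<gamma>)"
proof -
  define S where "S = {\<alpha>. a \<alpha> \<noteq> 0 \<and> b (\<gamma> - \<alpha>) \<noteq> 0}"
  have "finite S"
  proof (rule finite_if_min_and_max)
    fix T assume "T \<subseteq> S" "T \<noteq> {}"
    then show "\<exists>m\<in>T. \<forall>x\<in>T. m \<le> x"
      using assms(1) unfolding is_hahn_def hsupp_def S_def by blast
  next
    fix T assume T: "T \<subseteq> S" "T \<noteq> {}"
    then have "(\<lambda>x. \<gamma> - x) ` T \<subseteq> hsupp b" "(\<lambda>x. \<gamma> - x) ` T \<noteq> {}"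
      unfolding S_def hsupp_def by auto
    then obtain m where "m \<in> (\<lambda>x. \<gamma> - x) ` T" "\<forall>x\<in>(\<lambda>x. \<gamma> - x) ` T. m \<le> x"
      using assms(2) unfolding is_hahn_def by blast
    then show "\<exists>m\<in>T. \<forall>x\<in>T. x \<le> m" by force
  qed
  moreover have "hmul_pairs a b \<gamma> \<subseteq> (\<lambda>x. (x, \<gamma> - x)) ` S"
    unfolding hmul_pairs_def S_def by force
  ultimately show ?thesis by (meson finite_imageI finite_subset)
qed

lemma hmul_commute: "hmul a b = hmul b a"
proof
  fix \<gamma>
  have "hmul_pairs b a \<gamma> = prod.swap ` hmul_pairs a b \<gamma>"
    unfolding hmul_pairs_def by (auto simp: image_iff add.commute)
  then show "hmul a b \<gamma> = hmul b a \<gamma>"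
    unfolding hmul_eq_sum_pairs by (simp add: sum.reindex mult.commute)
qed

lemma hmul_eq_sum_superset:
  assumes "finite P" "hmul_pairs a b \<gamma> \<subseteq> P" "\<And>p. p \<in> P \<Longrightarrow> fst p + snd p = \<gamma>"
  shows "hmul a b \<gamma> = (\<Sum>p\<in>P. a (fst p) * b (snd p))"
  unfolding hmul_eq_sum_pairs
  by (rule sum.mono_neutral_left[OF assms(1,2)]) (use assms(3) in \<open>force simp: hmul_pairs_def\<close>)

lemma hmul_lincomb_left:
  assumes "finite K" "\<And>m. m \<in> K \<Longrightarrow> is_hahn (a m)" "is_hahn b"
  shows "hmul (\<lambda>x. \<Sum>m\<in>K. c m * a m x) b \<gamma> = (\<Sum>m\<in>K. c m * hmul (a m) b \<gamma>)"
proof -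
  define P where "P = (\<Union>m\<in>K. hmul_pairs (a m) b \<gamma>)"
  have P: "finite P" "\<And>p. p \<in> P \<Longrightarrow> fst p + snd p = \<gamma>"
    unfolding P_def hmul_pairs_def using assms finite_hmul_pairs[unfolded hmul_pairs_def] by auto
  have sub: "hmul_pairs (a m) b \<gamma> \<subseteq> P" if "m \<in> K" for m
    using that unfolding P_def by auto
  have "hmul_pairs (\<lambda>x. \<Sum>m\<in>K. c m * a m x) b \<gamma> \<subseteq> P"
    unfolding P_def hmul_pairs_def by (force intro: sum.neutral)
  then have "hmul (\<lambda>x. \<Sum>m\<in>K. c m * a m x) b \<gamma> = (\<Sum>p\<in>P. (\<Sum>m\<in>K. c m * a m (fst p)) * b (snd p))"
    using hmul_eq_sum_superset P by blast
  also have "\<dots> = (\<Sum>m\<in>K. c m * (\<Sum>p\<in>P. a m (fst p) * b (snd p)))"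
    by (simp add: sum_distrib_left sum_distrib_right mult.assoc) (rule sum.swap)
  also have "\<dots> = (\<Sum>m\<in>K. c m * hmul (a m) b \<gamma>)"
    using hmul_eq_sum_superset[OF P(1) sub P(2)] by simp
  finally show ?thesis .
qed

lemma hmul_lincomb_right:
  assumes "finite K" "\<And>m. m \<in> K \<Longrightarrow> is_hahn (b m)" "is_hahn a"
  shows "hmul a (\<lambda>x. \<Sum>m\<in>K. c m * b m x) \<gamma> = (\<Sum>m\<in>K. c m * hmul a (b m) \<gamma>)"
  using hmul_lincomb_left[OF assms] by (simp add: hmul_commute)

lemma is_hahn_finite_supp: "finite (hsupp a) \<Longrightarrow> is_hahn a"
  unfolding is_hahn_def
proof (intro allI impI)
  fix S assume "finite (hsupp a)" "S \<subseteq> hsupp a" "S \<noteq> {}"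
  then have "finite S" using finite_subset by blast
  with \<open>S \<noteq> {}\<close> show "\<exists>m\<in>S. \<forall>x\<in>S. m \<le> x" by (intro bexI[of _ "Min S"]) auto
qed

lemma is_hahn_union:
  assumes "is_hahn a" "is_hahn b" "hsupp c \<subseteq> hsupp a \<union> hsupp b"
  shows "is_hahn c"
  unfolding is_hahn_def
proof (intro allI impI)
  fix S assume S: "S \<subseteq> hsupp c" "S \<noteq> {}"
  have least: "\<exists>m\<in>S \<inter> hsupp d. \<forall>x\<in>S \<inter> hsupp d. m \<le> x"
    if "is_hahn d" "S \<inter> hsupp d \<noteq> {}" for d
    using that unfolding is_hahn_def by blast
  consider "S \<inter> hsupp a = {}" | "S \<inter> hsupp b = {}"
    | "S \<inter> hsupp a \<noteq> {}" "S \<inter> hsupp b \<noteq> {}" by blast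
  then show "\<exists>m\<in>S. \<forall>x\<in>S. m \<le> x"
  proof cases
    case 1
    then have "S \<inter> hsupp b = S" using S assms(3) by blast
    then show ?thesis using least[OF assms(2)] S by simp
  next
    case 2
    then have "S \<inter> hsupp a = S" using S assms(3) by blast
    then show ?thesis using least[OF assms(1)] S by simp
  next
    case 3
    obtain ma mb where "ma \<in> S \<inter> hsupp a" "\<forall>x\<in>S \<inter> hsupp a. ma \<le> x"
      "mb \<in> S \<inter> hsupp b" "\<forall>x\<in>S \<inter> hsupp b. mb \<le> x"
      using least[OF assms(1) 3(1)] least[OF assms(2) 3(2)] by blast
    moreover have "min ma mb \<le> x" if "x \<in> S" for x
      using that S assms(3) calculation by (auto simp: min_le_iff_disj)
    ultimately show ?thesis by (intro bexI[of _ "min ma mb"]) (auto simp: min_def)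
  qed
qed

lemma is_hahn_lincomb:
  assumes "finite K" "\<And>m. m \<in> K \<Longrightarrow> is_hahn (a m)"
  shows "is_hahn (\<lambda>x. \<Sum>m\<in>K. c m * a m x)"
  using assms
proof (induction K rule: finite_induct)
  case empty
  then show ?case by (simp add: is_hahn_finite_supp hsupp_def)
next
  case (insert k K)
  show ?case
    by (rule is_hahn_union[of "a k" "\<lambda>x. \<Sum>m\<in>K. c m * a m x"]) (use insert in \<open>auto simp: hsupp_def\<close>)
qed

lemma hdeg_nonzero_least:
  assumes "is_hahn a" "a \<noteq> (\<lambda>_. 0)"
  shows "a (hdeg a) \<noteq> 0" "\<And>x. a x \<noteq> 0 \<Longrightarrow> hdeg a \<le> x"
proof -
  have "hsupp a \<noteq> {}" using assms(2) unfolding hsupp_def by auto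
  then obtain m where m: "m \<in> hsupp a" "\<forall>x\<in>hsupp a. m \<le> x"
    using assms(1) unfolding is_hahn_def by blast
  then have "hdeg a = m" unfolding hdeg_def
    by (intro Least_equality) (auto simp: hsupp_def)
  then show "a (hdeg a) \<noteq> 0" "\<And>x. a x \<noteq> 0 \<Longrightarrow> hdeg a \<le> x"
    using m by (auto simp: hsupp_def)
qed

lemma hdeg_eqI:
  assumes "a \<alpha> \<noteq> 0" "\<And>x. a x \<noteq> 0 \<Longrightarrow> \<alpha> \<le> x"
  shows "hdeg a = \<alpha>"
  unfolding hdeg_def by (rule Least_equality) (use assms in auto)

definition hone :: hahn where
  "hone = (\<lambda>x. if x = 0 then 1 else 0)"

lemma hmul_hone_left: "hmul hone b = b"
proof
  fix \<gamma>
  have "hmul_pairs hone b \<gamma> = (if b \<gamma> \<noteq> 0 then {(0, \<gamma>)} else {})"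
    unfolding hmul_pairs_def hone_def by (auto split: if_splits)
  then show "hmul hone b \<gamma> = b \<gamma>" unfolding hmul_eq_sum_pairs by (simp add: hone_def)
qed

lemma hmul_zero_left: "hmul (\<lambda>_. 0) b = (\<lambda>_. 0)"
  unfolding hmul_def by simp

section \<open>Symmetric Kapranov rank\<close>

lemma hrank_le_dim:
  assumes "\<forall>i<n. \<forall>j<n. is_hahn (L i j)"
  shows "hrank_le n L n"
  unfolding hrank_le_def
proof (intro exI conjI)
  let ?B = "\<lambda>i k. if i = k then hone else (\<lambda>_. 0)"
  show "\<forall>i<n. \<forall>k<n. is_hahn (?B i k)"
    by (simp add: is_hahn_finite_supp hsupp_def hone_def)
  show "\<forall>k<n. \<forall>j<n. is_hahn (L k j)" using assms by blast
  show "\<forall>i<n. \<forall>j<n. L i j = (\<lambda>\<gamma>. \<Sum>k<n. hmul (?B i k) (L k j) \<gamma>)"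
  proof (intro allI impI ext)
    fix i j \<gamma> assume "i < n" "j < n"
    have "(\<Sum>k<n. hmul (?B i k) (L k j) \<gamma>) = (\<Sum>k<n. if k = i then L i j \<gamma> else 0)"
      by (rule sum.cong) (auto simp: hmul_hone_left hmul_zero_left)
    then show "L i j \<gamma> = (\<Sum>k<n. hmul (?B i k) (L k j) \<gamma>)" using \<open>i < n\<close> by simp
  qed
qed

lemma hrank_le_hrank:
  assumes "\<forall>i<n. \<forall>j<n. is_hahn (L i j)"
  shows "hrank_le n L (hrank n L)"
  unfolding hrank_def using hrank_le_dim[OF assms] by (rule LeastI)

lemma hrank_le_drop_first:
  assumes "hrank_le (Suc n) L r"
  shows "hrank_le n (\<lambda>i j. L (Suc i) (Suc j)) r"
proof -
  obtain B C where "\<forall>i<Suc n. \<forall>k<r. is_hahn (B i k)" "\<forall>k<r. \<forall>j<Suc n. is_hahn (C k j)"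
    "\<forall>i<Suc n. \<forall>j<Suc n. L i j = (\<lambda>\<gamma>. \<Sum>k<r. hmul (B i k) (C k j) \<gamma>)"
    using assms unfolding hrank_le_def by blast
  then show ?thesis unfolding hrank_le_def
    by (intro exI[of _ "\<lambda>i k. B (Suc i) k"] exI[of _ "\<lambda>k j. C k (Suc j)"]) simp
qed

lemma sym_lift_aug_drop_first:
  assumes "sym_lift (Suc n) (aug A) L"
  shows "sym_lift n A (\<lambda>i j. L (Suc i) (Suc j))"
  using assms unfolding sym_lift_def symmetric_mat_def by (auto simp: aug_def)

lemma sym_lift_monomials:
  assumes "symmetric_mat n A"
  shows "sym_lift n A (\<lambda>i j x. if x = A i j then 1 else 0)"
  using assms unfolding sym_lift_def symmetric_mat_def
proof (intro conjI allI impI)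
  fix i j assume "i < n" "j < n"
  show "is_hahn (\<lambda>x. if x = A i j then 1 else 0)"
    by (rule is_hahn_finite_supp) (simp add: hsupp_def)
  show "(\<lambda>x. if x = A i j then 1 else 0) \<noteq> (\<lambda>_. 0::complex)"
    by (metis one_neq_zero)
  show "hdeg (\<lambda>x. if x = A i j then 1 else 0) = A i j"
    by (rule hdeg_eqI) (auto split: if_splits)
qed auto

lemma sym_kapranov_rank_le:
  assumes "sym_lift n A L" "hrank_le n L r"
  shows "sym_kapranov_rank n A \<le> r"
proof -
  have "sym_kapranov_rank n A \<le> hrank n L"
    unfolding sym_kapranov_rank_def by (rule Least_le) (use assms(1) in blast)
  also have "hrank n L \<le> r"
    unfolding hrank_def using assms(2) by (rule Least_le)
  finally show ?thesis .
qed

lemma ex_sym_lift_of_sym_kapranov_rank: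
  assumes "symmetric_mat n A"
  obtains L where "sym_lift n A L" "hrank_le n L (sym_kapranov_rank n A)"
proof -
  define P where "P r \<longleftrightarrow> (\<exists>L. sym_lift n A L \<and> hrank n L = r)" for r
  have "\<exists>r. P r" using sym_lift_monomials[OF assms] unfolding P_def by blast
  then have "P (LEAST r. P r)" by (rule LeastI_ex)
  then obtain L where "sym_lift n A L" "hrank n L = sym_kapranov_rank n A"
    unfolding sym_kapranov_rank_def P_def by blast
  moreover from this(1) have "\<forall>i<n. \<forall>j<n. is_hahn (L i j)" unfolding sym_lift_def by blast
  ultimately show ?thesis using that hrank_le_hrank[of n L] by simp
qed

lemma ex_nonzero_quadratic_form:
  fixes c :: "nat \<Rightarrow> nat \<Rightarrow> complex"
  assumes sym: "\<forall>i<n. \<forall>j<n. c i j = c j i" and "i < n" "j < n" "c i j \<noteq> 0"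
  shows "\<exists>w. (\<Sum>m<n. w m * (\<Sum>m'<n. w m' * c m m')) \<noteq> 0"
proof -
  define Q where "Q w = (\<Sum>m<n. w m * (\<Sum>m'<n. w m' * c m m'))" for w
  define e where "e k m = (if m = k then 1 else (0::complex))" for k m :: nat
  have delta: "e k m * a = (if m = k then a else 0)" for k m a
    by (simp add: e_def)
  have diag: "Q (e k) = c k k" if "k < n" for k
    using that by (simp add: Q_def delta)
  show ?thesis
  proof (cases "c i i = 0 \<and> c j j = 0")
    case True
    then have "i \<noteq> j" using assms(4) by auto
    have "Q (\<lambda>m. e i m + e j m) = c i i + c i j + c j i + c j j"
      using \<open>i \<noteq> j\<close> assms(2,3) by (simp add: Q_def distrib_right sum.distrib delta)
    also have "\<dots> = 2 * c i j" using True sym assms(2,3) by simp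
    finally show ?thesis using assms(4) unfolding Q_def by (intro exI[of _ "\<lambda>m. e i m + e j m"]) simp
  next
    case False
    then show ?thesis using diag assms(2,3) unfolding Q_def by metis
  qed
qed

lemma ex_avoid_poly_roots:
  fixes e :: "'k \<Rightarrow> nat \<Rightarrow> complex"
  assumes "finite K" "\<And>k. k \<in> K \<Longrightarrow> \<exists>i\<le>d. e k i \<noteq> 0"
  shows "\<exists>x. \<forall>k\<in>K. (\<Sum>i\<le>d. e k i * x ^ i) \<noteq> 0"
proof -
  have "finite (\<Union>k\<in>K. {x. (\<Sum>i\<le>d. e k i * x ^ i) = 0})"
    using assms polyfun_roots_finite by blast
  then obtain x where "x \<notin> (\<Union>k\<in>K. {x. (\<Sum>i\<le>d. e k i * x ^ i) = 0})"
    using ex_new_if_finite[OF infinite_UNIV_char_0] by blast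
  then show ?thesis by blast
qed

lemma ex_generic_combination:
  fixes c :: "nat \<Rightarrow> nat \<Rightarrow> complex"
  assumes sym: "\<forall>i<n. \<forall>j<n. c i j = c j i" and cols: "\<forall>j<n. \<exists>i<n. c i j \<noteq> 0" and "0 < n"
  shows "\<exists>l. (\<forall>j<n. (\<Sum>m<n. l m * c m j) \<noteq> 0) \<and> (\<Sum>m<n. l m * (\<Sum>m'<n. l m' * c m m')) \<noteq> 0"
proof -
  \<comment> \<open>First the point g = (y^m) makes every linear form nonzero, then a point on the line
     w + x g also keeps the quadratic form nonzero: each step avoids the finitely many roots of
     univariate polynomials.\<close>
  define Q where "Q w = (\<Sum>m<n. w m * (\<Sum>m'<n. w m' * c m m'))" for w
  define lin where "lin w j = (\<Sum>m<n. w m * c m j)" for w j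
  obtain i where "i < n" "c i 0 \<noteq> 0" using cols \<open>0 < n\<close> by blast
  then obtain w where w: "Q w \<noteq> 0"
    using ex_nonzero_quadratic_form[OF sym] \<open>0 < n\<close> unfolding Q_def by blast
  have "\<exists>i\<le>n. (if i < n then c i j else 0) \<noteq> 0" if j: "j \<in> {..<n}" for j
  proof -
    obtain i where "i < n" "c i j \<noteq> 0" using cols j by blast
    then show ?thesis by (intro exI[of _ i]) simp
  qed
  then obtain y where "\<forall>j\<in>{..<n}. (\<Sum>i\<le>n. (if i < n then c i j else 0) * y ^ i) \<noteq> 0"
    using ex_avoid_poly_roots[of "{..<n}" n "\<lambda>j i. if i < n then c i j else 0"] by blast
  moreover define g where "g m = y ^ m" for m
  ultimately have g: "lin g j \<noteq> 0" if "j < n" for j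
    using that by (simp add: lin_def g_def lessThan_Suc_atMost[symmetric] mult.commute)
  define R where "R = (\<Sum>m<n. w m * (\<Sum>m'<n. g m' * c m m') + g m * (\<Sum>m'<n. w m' * c m m'))"
  define E where "E k = (case k of
      None \<Rightarrow> (\<lambda>i::nat. if i = 0 then Q w else if i = 1 then R else Q g)
    | Some j \<Rightarrow> (\<lambda>i. if i = 0 then lin w j else if i = 1 then lin g j else 0))" for k
  have "\<exists>i\<le>2. E k i \<noteq> 0" if k: "k \<in> insert None (Some ` {..<n})" for k
  proof (cases k)
    case None
    then show ?thesis using w by (intro exI[of _ 0]) (simp add: E_def)
  next
    case (Some j)
    then show ?thesis using k g by (intro exI[of _ 1]) (auto simp: E_def)
  qed
  then obtain x where x: "\<forall>k\<in>insert None (Some ` {..<n}). (\<Sum>i\<le>2. E k i * x ^ i) \<noteq> 0"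
    using ex_avoid_poly_roots[of "insert None (Some ` {..<n})" 2 E] by blast
  have "Q (\<lambda>m. w m + x * g m) = Q w + x * R + x\<^sup>2 * Q g"
    unfolding Q_def R_def by (simp add: algebra_simps sum.distrib sum_distrib_left power2_eq_square)
  also have "\<dots> = (\<Sum>i\<le>2. E None i * x ^ i)"
    by (simp add: E_def numeral_2_eq_2)
  finally have quad: "Q (\<lambda>m. w m + x * g m) \<noteq> 0"
    using x by simp
  have "lin (\<lambda>m. w m + x * g m) j = lin w j + x * lin g j" for j
    unfolding lin_def by (simp add: algebra_simps sum.distrib sum_distrib_left)
  also have "lin w j + x * lin g j = (\<Sum>i\<le>2. E (Some j) i * x ^ i)" for j
    by (simp add: E_def numeral_2_eq_2)
  finally have "lin (\<lambda>m. w m + x * g m) j \<noteq> 0" if "j < n" for j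
    using x that by simp
  with quad show ?thesis
    unfolding Q_def lin_def by (intro exI[of _ "\<lambda>m. w m + x * g m"]) simp
qed

definition border :: "nat \<Rightarrow> (nat \<Rightarrow> complex) \<Rightarrow> (nat \<Rightarrow> nat \<Rightarrow> hahn) \<Rightarrow> nat \<Rightarrow> nat \<Rightarrow> hahn" where
  "border n l L i j =
     (if i = 0 \<and> j = 0 then (\<lambda>x. \<Sum>m<n. l m * (\<Sum>m'<n. l m' * L m m' x))
      else if i = 0 then (\<lambda>x. \<Sum>m<n. l m * L m (j - 1) x)
      else if j = 0 then (\<lambda>x. \<Sum>m<n. l m * L (i - 1) m x)
      else L (i - 1) (j - 1))"

lemma sum_hmul_lincomb_left:
  fixes n r :: nat
  assumes "\<forall>m<n. \<forall>k<r. is_hahn (B m k)" "\<forall>k<r. is_hahn (c k)"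
  shows "(\<Sum>k<r. hmul (\<lambda>x. \<Sum>m<n. l m * B m k x) (c k) \<gamma>) = (\<Sum>m<n. l m * (\<Sum>k<r. hmul (B m k) (c k) \<gamma>))"
proof -
  have "(\<Sum>k<r. hmul (\<lambda>x. \<Sum>m<n. l m * B m k x) (c k) \<gamma>) = (\<Sum>k<r. \<Sum>m<n. l m * hmul (B m k) (c k) \<gamma>)"
    using assms by (intro sum.cong refl hmul_lincomb_left) auto
  also have "\<dots> = (\<Sum>m<n. l m * (\<Sum>k<r. hmul (B m k) (c k) \<gamma>))"
    by (subst sum.swap) (simp add: sum_distrib_left)
  finally show ?thesis .
qed

lemma sum_hmul_lincomb_right:
  fixes n r :: nat
  assumes "\<forall>k<r. \<forall>m<n. is_hahn (C k m)" "\<forall>k<r. is_hahn (b k)"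
  shows "(\<Sum>k<r. hmul (b k) (\<lambda>x. \<Sum>m<n. l m * C k m x) \<gamma>) = (\<Sum>m<n. l m * (\<Sum>k<r. hmul (b k) (C k m) \<gamma>))"
  using sum_hmul_lincomb_left[of n r "\<lambda>m k. C k m" b l \<gamma>] assms by (simp add: hmul_commute)

lemma hrank_le_border:
  assumes "hrank_le n L r"
  shows "hrank_le (Suc n) (border n l L) r"
proof -
  obtain B C where hB: "\<forall>i<n. \<forall>k<r. is_hahn (B i k)" and hC: "\<forall>k<r. \<forall>j<n. is_hahn (C k j)"
    and BC: "\<forall>i<n. \<forall>j<n. L i j = (\<lambda>\<gamma>. \<Sum>k<r. hmul (B i k) (C k j) \<gamma>)"
    using assms unfolding hrank_le_def by blast
  define B' where "B' i k = (if i = 0 then (\<lambda>x. \<Sum>m<n. l m * B m k x) else B (i - 1) k)" for i k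
  define C' where "C' k j = (if j = 0 then (\<lambda>x. \<Sum>m<n. l m * C k m x) else C k (j - 1))" for k j
  have hB': "\<forall>i<Suc n. \<forall>k<r. is_hahn (B' i k)" and hC': "\<forall>k<r. \<forall>j<Suc n. is_hahn (C' k j)"
    using hB hC by (auto simp: B'_def C'_def intro!: is_hahn_lincomb)
  have "border n l L i j = (\<lambda>\<gamma>. \<Sum>k<r. hmul (B' i k) (C' k j) \<gamma>)"
    if ij: "i < Suc n" "j < Suc n" for i j
  proof -
    have row: "(\<Sum>k<r. hmul (B' 0 k) (C' k j) \<gamma>) = (\<Sum>m<n. l m * (\<Sum>k<r. hmul (B m k) (C' k j) \<gamma>))"
      for \<gamma> using hB hC' ij(2) by (simp add: B'_def sum_hmul_lincomb_left)
    have col: "(\<Sum>k<r. hmul (B i' k) (C' k 0) \<gamma>) = (\<Sum>m<n. l m * L i' m \<gamma>)" if "i' < n" for i' \<gamma>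
      using hB hC BC that by (simp add: C'_def sum_hmul_lincomb_right)
    consider "i = 0" "j = 0" | j' where "i = 0" "j = Suc j'" "j' < n"
      | i' where "i = Suc i'" "j = 0" "i' < n" | i' j' where "i = Suc i'" "j = Suc j'" "i' < n" "j' < n"
      using ij by (cases i; cases j) auto
    then show ?thesis
    proof cases
      case 1
      then show ?thesis using row col by (simp add: border_def)
    next
      case 2
      then show ?thesis using row BC by (simp add: border_def C'_def)
    next
      case 3
      then show ?thesis using col by (simp add: border_def B'_def)
    next
      case 4
      then show ?thesis using BC by (simp add: border_def B'_def C'_def)
    qed
  qed
  then show ?thesis unfolding hrank_le_def using hB' hC' by blast
qed

lemma symmetric_border:
  assumes "symmetric_mat n L"
  shows "symmetric_mat (Suc n) (border n l L)"
  unfolding symmetric_mat_def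
proof (intro allI impI)
  fix i j assume ij: "i < Suc n" "j < Suc n"
  have flip: "(\<lambda>x. \<Sum>m<n. l m * L m k x) = (\<lambda>x. \<Sum>m<n. l m * L k m x)" if "k < n" for k
    using that assms unfolding symmetric_mat_def by (intro ext sum.cong) auto
  consider "i = 0" "j = 0" | "i = 0" "0 < j" | "0 < i" "j = 0" | "0 < i" "0 < j"
    by auto
  then show "border n l L i j = border n l L j i"
  proof cases
    case 4
    then show ?thesis using ij assms unfolding symmetric_mat_def by (simp add: border_def)
  qed (use ij flip in \<open>simp_all add: border_def\<close>)
qed

lemma nonneg_supp_lincomb:
  assumes "finite K" "\<And>m. m \<in> K \<Longrightarrow> is_hahn (a m) \<and> hsupp (a m) \<subseteq> {0..}"
  shows "is_hahn (\<lambda>x. \<Sum>m\<in>K. c m * a m x) \<and> hsupp (\<lambda>x. \<Sum>m\<in>K. c m * a m x) \<subseteq> {0..}"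
proof
  show "is_hahn (\<lambda>x. \<Sum>m\<in>K. c m * a m x)" using assms by (simp add: is_hahn_lincomb)
  have "\<exists>m\<in>K. a m x \<noteq> 0" if "(\<Sum>m\<in>K. c m * a m x) \<noteq> 0" for x
  proof (rule ccontr)
    assume "\<not> (\<exists>m\<in>K. a m x \<noteq> 0)"
    then have "(\<Sum>m\<in>K. c m * a m x) = 0" by simp
    with that show False by contradiction
  qed
  then show "hsupp (\<lambda>x. \<Sum>m\<in>K. c m * a m x) \<subseteq> {0..}"
    using assms(2) unfolding hsupp_def by fastforce
qed

lemma sym_lift_nonneg_supp:
  assumes "normalized n A" "sym_lift n A L" "i < n" "j < n"
  shows "is_hahn (L i j) \<and> hsupp (L i j) \<subseteq> {0..}"
proof -
  have "hdeg (L i j) \<le> x" if "x \<in> hsupp (L i j)" for x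
    using hdeg_nonzero_least(2) that assms(2-4) unfolding sym_lift_def hsupp_def by blast
  moreover have "0 \<le> hdeg (L i j)"
    using assms unfolding sym_lift_def normalized_def by simp
  ultimately show ?thesis using assms(2-4) unfolding sym_lift_def by force
qed

lemma hdeg_eq_0I: "hsupp f \<subseteq> {0..} \<Longrightarrow> f 0 \<noteq> 0 \<Longrightarrow> hdeg f = 0"
  by (rule hdeg_eqI) (auto simp: hsupp_def subset_iff)

lemma sym_lift_border:
  assumes "normalized n A" "sym_lift n A L"
    and row: "\<forall>j<n. (\<Sum>m<n. l m * L m j 0) \<noteq> 0"
    and corner: "(\<Sum>m<n. l m * (\<Sum>m'<n. l m' * L m m' 0)) \<noteq> 0"
  shows "sym_lift (Suc n) (aug A) (border n l L)"
proof -
  note L = sym_lift_nonneg_supp[OF assms(1,2)]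
  have Lsym: "symmetric_mat n L" using assms(2) unfolding sym_lift_def by blast
  have new: "is_hahn (border n l L i j) \<and> hsupp (border n l L i j) \<subseteq> {0..} \<and> border n l L i j 0 \<noteq> 0"
    if ij: "i = 0 \<or> j = 0" "i < Suc n" "j < Suc n" for i j
  proof -
    have inner: "is_hahn (\<lambda>x. \<Sum>m'<n. l m' * L m m' x) \<and> hsupp (\<lambda>x. \<Sum>m'<n. l m' * L m m' x) \<subseteq> {0..}"
      if "m < n" for m
      using that L by (intro nonneg_supp_lincomb) auto
    consider "i = 0" "j = 0" | j' where "i = 0" "j = Suc j'" "j' < n" | i' where "j = 0" "i = Suc i'" "i' < n"
      using ij by (cases i; cases j) auto
    then show ?thesis
    proof cases
      case (3 i')
      then have "border n l L i j = border n l L j i"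
        using symmetric_border[OF Lsym] ij(2,3) unfolding symmetric_mat_def by blast
      then show ?thesis using 3 row L by (auto simp: border_def intro!: nonneg_supp_lincomb)
    qed (use row corner L inner in \<open>auto simp: border_def intro!: nonneg_supp_lincomb\<close>)
  qed
  have "is_hahn (border n l L i j) \<and> border n l L i j \<noteq> (\<lambda>_. 0) \<and> hdeg (border n l L i j) = aug A i j"
    if ij: "i < Suc n" "j < Suc n" for i j
  proof (cases "i = 0 \<or> j = 0")
    case True
    then show ?thesis using new[OF True ij] hdeg_eq_0I by (auto simp: aug_def)
  next
    case False
    moreover have "i - 1 < n" "j - 1 < n" using ij False by auto
    ultimately show ?thesis using assms(2) unfolding sym_lift_def by (simp add: border_def aug_def)
  qed
  then show ?thesis unfolding sym_lift_def using symmetric_border[OF Lsym] by blast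
qed

lemma sym_kapranov_rank_0: "sym_kapranov_rank 0 A = 0"
  using sym_kapranov_rank_le[of 0 A "\<lambda>_ _. hone" 0] by (simp add: sym_lift_def symmetric_mat_def hrank_le_def)

lemma sym_kapranov_rank_aug:
  assumes "symmetric_mat n A" "normalized n A" "0 < n"
  shows "sym_kapranov_rank (Suc n) (aug A) = sym_kapranov_rank n A"
proof (rule antisym)
  obtain L where L: "sym_lift n A L" "hrank_le n L (sym_kapranov_rank n A)"
    using ex_sym_lift_of_sym_kapranov_rank[OF assms(1)] .
  have "\<forall>j<n. \<exists>i<n. L i j 0 \<noteq> 0"
  proof (intro allI impI)
    fix j assume "j < n"
    then obtain i where "i < n" "A i j = 0" using assms(2) unfolding normalized_def by blast
    then show "\<exists>i<n. L i j 0 \<noteq> 0"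
      using L(1) hdeg_nonzero_least(1)[of "L i j"] \<open>j < n\<close> unfolding sym_lift_def by auto
  qed
  moreover have "\<forall>i<n. \<forall>j<n. L i j 0 = L j i 0"
    using L(1) unfolding sym_lift_def symmetric_mat_def by simp
  ultimately obtain l where "\<forall>j<n. (\<Sum>m<n. l m * L m j 0) \<noteq> 0"
    "(\<Sum>m<n. l m * (\<Sum>m'<n. l m' * L m m' 0)) \<noteq> 0"
    using ex_generic_combination[of n "\<lambda>i j. L i j 0"] assms(3) by blast
  then have "sym_lift (Suc n) (aug A) (border n l L)"
    using sym_lift_border assms(2) L(1) by blast
  moreover have "hrank_le (Suc n) (border n l L) (sym_kapranov_rank n A)"
    using L(2) by (rule hrank_le_border)
  ultimately show "sym_kapranov_rank (Suc n) (aug A) \<le> sym_kapranov_rank n A"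
    by (rule sym_kapranov_rank_le)
next
  have "symmetric_mat (Suc n) (aug A)"
    using assms(1) unfolding symmetric_mat_def aug_def by auto
  then obtain L where "sym_lift (Suc n) (aug A) L" "hrank_le (Suc n) L (sym_kapranov_rank (Suc n) (aug A))"
    by (rule ex_sym_lift_of_sym_kapranov_rank)
  then show "sym_kapranov_rank n A \<le> sym_kapranov_rank (Suc n) (aug A)"
    using sym_kapranov_rank_le sym_lift_aug_drop_first hrank_le_drop_first by blast
qed

section \<open>Symmetric tropical rank\<close>

lemma mono_value_insert:
  "finite I \<Longrightarrow> i \<notin> I \<Longrightarrow> mono_value M (insert i I) \<rho> = M i (\<rho> i) + mono_value M I \<rho>"
  unfolding mono_value_def by simp

lemma mono_value_cong:
  "(\<And>i. i \<in> I \<Longrightarrow> \<rho> i = \<tau> i) \<Longrightarrow> mono_value M I \<rho> = mono_value M I \<tau>"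
  unfolding mono_value_def by simp

lemma sym_monomial_insert:
  "finite I \<Longrightarrow> i \<notin> I \<Longrightarrow> sym_monomial (insert i I) \<rho> = add_mset {i, \<rho> i} (sym_monomial I \<rho>)"
  unfolding sym_monomial_def by simp

lemma sym_monomial_cong:
  "finite I \<Longrightarrow> (\<And>i. i \<in> I \<Longrightarrow> \<rho> i = \<tau> i) \<Longrightarrow> sym_monomial I \<rho> = sym_monomial I \<tau>"
  unfolding sym_monomial_def by (auto intro: image_mset_cong)

lemma mono_value_fun_upd_insert:
  assumes "finite I" "i \<notin> I"
  shows "mono_value M (insert i I) (\<rho>(i := j)) = M i j + mono_value M I \<rho>"
proof -
  have "mono_value M I (\<rho>(i := j)) = mono_value M I \<rho>"
    using assms(2) by (intro mono_value_cong) auto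
  then show ?thesis using assms by (simp add: mono_value_insert)
qed

lemma sym_monomial_fun_upd_insert:
  assumes "finite I" "i \<notin> I"
  shows "sym_monomial (insert i I) (\<rho>(i := j)) = add_mset {i, j} (sym_monomial I \<rho>)"
proof -
  have "sym_monomial I (\<rho>(i := j)) = sym_monomial I \<rho>"
    using assms by (intro sym_monomial_cong) auto
  then show ?thesis using assms by (simp add: sym_monomial_insert)
qed

lemma bij_betw_fun_upd_insert:
  assumes "bij_betw \<rho> I J" "i \<notin> I" "j \<notin> J"
  shows "bij_betw (\<rho>(i := j)) (insert i I) (insert j J)"
proof -
  have "bij_betw (\<rho>(i := j)) I J" using assms(1,2) by (subst bij_betw_cong[of _ _ \<rho>]) auto
  then have "bij_betw (\<rho>(i := j)) (I \<union> {i}) (J \<union> {j})"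
    by (rule bij_betw_combine) (use assms(3) in auto)
  then show ?thesis by simp
qed

definition optimal_bij :: "(nat \<Rightarrow> nat \<Rightarrow> real) \<Rightarrow> nat set \<Rightarrow> nat set \<Rightarrow> (nat \<Rightarrow> nat) \<Rightarrow> bool" where
  "optimal_bij M I J \<sigma> \<longleftrightarrow>
     bij_betw \<sigma> I J \<and> (\<forall>\<rho>. bij_betw \<rho> I J \<longrightarrow> mono_value M I \<sigma> \<le> mono_value M I \<rho>)"

lemma ex_optimal_bij:
  assumes "finite I" "finite J" "card I = card J"
  obtains \<sigma> where "optimal_bij M I J \<sigma>"
proof -
  define F where "F = {\<rho> \<in> I \<rightarrow>\<^sub>E J. bij_betw \<rho> I J}"
  have restrict: "restrict \<rho> I \<in> F" "mono_value M I (restrict \<rho> I) = mono_value M I \<rho>"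
    if "bij_betw \<rho> I J" for \<rho>
    using that unfolding F_def mono_value_def by (auto simp: bij_betw_def inj_on_def)
  obtain \<rho>0 where "bij_betw \<rho>0 I J" using finite_same_card_bij[OF assms] by blast
  then have "F \<noteq> {}" using restrict(1) by blast
  moreover have "finite (I \<rightarrow>\<^sub>E J)" using assms(1,2) by (rule finite_PiE)
  then have "finite F" unfolding F_def by (rule rev_finite_subset) blast
  ultimately have V: "finite (mono_value M I ` F)" "mono_value M I ` F \<noteq> {}" by auto
  then obtain \<sigma> where \<sigma>: "\<sigma> \<in> F" "mono_value M I \<sigma> = Min (mono_value M I ` F)"
    using Min_in[OF V] by (metis imageE)
  have "optimal_bij M I J \<sigma>"
    unfolding optimal_bij_def
  proof (intro conjI allI impI)
    show "bij_betw \<sigma> I J" using \<sigma>(1) unfolding F_def by simp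
    fix \<rho> assume \<rho>: "bij_betw \<rho> I J"
    have "Min (mono_value M I ` F) \<le> mono_value M I (restrict \<rho> I)"
      using V(1) restrict(1)[OF \<rho>] by simp
    then show "mono_value M I \<sigma> \<le> mono_value M I \<rho>" using \<sigma>(2) restrict(2)[OF \<rho>] by simp
  qed
  then show ?thesis by (rule that)
qed

lemma optimal_bij_strict:
  assumes "\<not> sym_trop_singular M I J" "optimal_bij M I J \<sigma>" "bij_betw \<rho> I J"
    "sym_monomial I \<rho> \<noteq> sym_monomial I \<sigma>"
  shows "mono_value M I \<sigma> < mono_value M I \<rho>"
proof (rule ccontr)
  assume "\<not> mono_value M I \<sigma> < mono_value M I \<rho>"
  moreover have "mono_value M I \<sigma> \<le> mono_value M I \<rho>"
    using assms(2,3) unfolding optimal_bij_def by blast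
  ultimately have "mono_value M I \<rho> = mono_value M I \<sigma>" by simp
  moreover have "sym_monomial I \<sigma> \<noteq> sym_monomial I \<rho>" using assms(4) by simp
  ultimately have "sym_trop_singular M I J"
    using assms(2,3) unfolding sym_trop_singular_def optimal_bij_def by blast
  with assms(1) show False by contradiction
qed

lemma not_sym_trop_singularI:
  assumes "bij_betw \<tau> I J"
    and "\<And>\<rho>. bij_betw \<rho> I J \<Longrightarrow> sym_monomial I \<rho> \<noteq> sym_monomial I \<tau> \<Longrightarrow>
           mono_value M I \<tau> < mono_value M I \<rho>"
  shows "\<not> sym_trop_singular M I J"
proof
  assume "sym_trop_singular M I J"
  then obtain \<rho>1 \<rho>2 where \<rho>: "bij_betw \<rho>1 I J" "bij_betw \<rho>2 I J"
    "\<forall>\<rho>. bij_betw \<rho> I J \<longrightarrow> mono_value M I \<rho>1 \<le> mono_value M I \<rho>"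
    "mono_value M I \<rho>2 = mono_value M I \<rho>1" "sym_monomial I \<rho>1 \<noteq> sym_monomial I \<rho>2"
    unfolding sym_trop_singular_def by blast
  have eq: "sym_monomial I \<rho>' = sym_monomial I \<tau>"
    if "bij_betw \<rho>' I J" "mono_value M I \<rho>' \<le> mono_value M I \<tau>" for \<rho>'
    using assms(2)[OF that(1)] that(2) by fastforce
  have "mono_value M I \<rho>1 \<le> mono_value M I \<tau>" using \<rho>(3) assms(1) by blast
  then have "sym_monomial I \<rho>1 = sym_monomial I \<tau>" "sym_monomial I \<rho>2 = sym_monomial I \<tau>"
    using eq \<rho>(1,2,4) by simp_all
  with \<rho>(5) show False by simp
qed

lemma sym_monomial_eq_cases:
  assumes "finite I" "sym_monomial I \<rho> = sym_monomial I \<sigma>" "i \<in> I"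
  shows "\<rho> i = \<sigma> i \<or> (\<exists>k\<in>I. \<sigma> k = i \<and> \<rho> i = k)"
proof -
  have "{i, \<rho> i} \<in># sym_monomial I \<rho>"
    using assms(1,3) unfolding sym_monomial_def by simp
  then obtain k where "k \<in> I" "{i, \<rho> i} = {k, \<sigma> k}"
    using assms(1,2) unfolding sym_monomial_def by auto
  then show ?thesis by (auto simp: doubleton_eq_iff)
qed

lemma sym_monomial_swap_neq:
  assumes "finite I" "inj_on \<sigma> I" "a \<in> I" "b \<in> I" "a \<noteq> b"
  shows "sym_monomial I (\<sigma> \<circ> transpose a b) \<noteq> sym_monomial I \<sigma>"
proof
  define I0 where "I0 = I - {a, b}"
  have I: "I = insert a (insert b I0)" "a \<notin> insert b I0" "b \<notin> I0" "finite I0"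
    using assms unfolding I0_def by auto
  have "sym_monomial I0 (\<sigma> \<circ> transpose a b) = sym_monomial I0 \<sigma>"
    using I by (intro sym_monomial_cong) (auto simp: transpose_def I0_def)
  moreover assume "sym_monomial I (\<sigma> \<circ> transpose a b) = sym_monomial I \<sigma>"
  ultimately have "{#{a, \<sigma> b}, {b, \<sigma> a}#} = {#{a, \<sigma> a}, {b, \<sigma> b}#}"
    unfolding I(1) using I by (simp add: sym_monomial_insert add_mset_commute)
  moreover have "\<sigma> a \<noteq> \<sigma> b" using assms(2-5) by (meson inj_onD)
  ultimately show False using assms(5) by (auto simp: add_eq_conv_ex doubleton_eq_iff)
qed

lemma mono_value_swap:
  assumes "finite I" "a \<in> I" "b \<in> I" "a \<noteq> b"
  shows "mono_value M I (\<sigma> \<circ> transpose a b) + M a (\<sigma> a) + M b (\<sigma> b) =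
         mono_value M I \<sigma> + M a (\<sigma> b) + M b (\<sigma> a)"
proof -
  define I0 where "I0 = I - {a, b}"
  have I: "I = insert a (insert b I0)" "a \<notin> insert b I0" "b \<notin> I0" "finite I0"
    using assms unfolding I0_def by auto
  have "mono_value M I0 (\<sigma> \<circ> transpose a b) = mono_value M I0 \<sigma>"
    using I by (intro mono_value_cong) (auto simp: transpose_def I0_def)
  then show ?thesis unfolding I(1) using I assms(4) by (simp add: mono_value_insert)
qed

lemma optimal_bij_swap_strict:
  assumes "\<not> sym_trop_singular M I J" "finite I" "optimal_bij M I J \<sigma>" "a \<in> I" "b \<in> I" "a \<noteq> b"
  shows "M a (\<sigma> a) + M b (\<sigma> b) < M a (\<sigma> b) + M b (\<sigma> a)"
proof -
  have \<sigma>: "bij_betw \<sigma> I J" using assms(3) unfolding optimal_bij_def by blast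
  then have "bij_betw (\<sigma> \<circ> transpose a b) I J" using assms(4,5) by (simp add: bij_betw_swap_iff)
  moreover have "sym_monomial I (\<sigma> \<circ> transpose a b) \<noteq> sym_monomial I \<sigma>"
    using sym_monomial_swap_neq assms(2,4-6) bij_betw_imp_inj_on[OF \<sigma>] by blast
  ultimately have "mono_value M I \<sigma> < mono_value M I (\<sigma> \<circ> transpose a b)"
    by (rule optimal_bij_strict[OF assms(1,3)])
  then show ?thesis using mono_value_swap[OF assms(2,4-6), of M \<sigma>] by linarith
qed

lemma optimal_bij_zero_row_pos:
  assumes "\<not> sym_trop_singular M I J" "finite I" "optimal_bij M I J \<sigma>" "i \<in> I" "k \<in> I" "k \<noteq> i"
    and "\<And>j. j \<in> J \<Longrightarrow> M i j = 0" "0 \<le> M k (\<sigma> k)"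
  shows "0 < M k (\<sigma> i)"
proof -
  have "\<sigma> i \<in> J" "\<sigma> k \<in> J"
    using assms(3-5) unfolding optimal_bij_def by (auto simp: bij_betw_apply)
  then show ?thesis
    using optimal_bij_swap_strict[OF assms(1-5)] assms(6-8) by force
qed

lemma bij_betw_rename_point:
  assumes "bij_betw \<rho> I J" "i \<in> I" "r \<notin> I"
  shows "bij_betw (\<rho>(r := \<rho> i)) (insert r (I - {i})) J"
proof -
  have "bij_betw \<rho> (I - {i}) (J - {\<rho> i})"
    by (rule bij_betw_DiffI[OF assms(1)]) (use assms(1,2) in \<open>auto simp: bij_betw_apply\<close>)
  then have "bij_betw (\<rho>(r := \<rho> i)) (insert r (I - {i})) (insert (\<rho> i) (J - {\<rho> i}))"
    using assms(3) by (intro bij_betw_fun_upd_insert) auto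
  moreover have "insert (\<rho> i) (J - {\<rho> i}) = J" using assms(1,2) by (auto simp: bij_betw_apply)
  ultimately show ?thesis by simp
qed

lemma not_sym_trop_singular_replace_row:
  assumes "finite I" "i \<in> I" "r \<notin> I"
    and nonsing: "\<not> sym_trop_singular M I J" and \<sigma>: "optimal_bij M I J \<sigma>"
    and dom: "\<And>j. j \<in> J \<Longrightarrow> M i j \<le> M r j" and eq: "M r (\<sigma> i) = M i (\<sigma> i)"
    \<comment> \<open>bijections sharing the monomial of \<sigma> but moving i must become dearer on row r\<close>
    and stable: "\<And>\<rho>. bij_betw \<rho> I J \<Longrightarrow> sym_monomial I \<rho> = sym_monomial I \<sigma> \<Longrightarrow> \<rho> i \<noteq> \<sigma> i \<Longrightarrow>
      M i (\<rho> i) < M r (\<rho> i)"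
  shows "\<not> sym_trop_singular M (insert r (I - {i})) J"
proof -
  define I0 where "I0 = I - {i}"
  have I: "I = insert i I0" "i \<notin> I0" "r \<notin> I0" "finite I0" "insert i (insert r I0 - {r}) = I"
    using assms(1-3) unfolding I0_def by auto
  have \<sigma>_bij: "bij_betw \<sigma> I J" using \<sigma> unfolding optimal_bij_def by blast
  show ?thesis
    unfolding I0_def[symmetric]
  proof (rule not_sym_trop_singularI)
    show "bij_betw (\<sigma>(r := \<sigma> i)) (insert r I0) J"
      unfolding I0_def using \<sigma>_bij assms(2,3) by (rule bij_betw_rename_point)
    fix \<rho>' assume \<rho>': "bij_betw \<rho>' (insert r I0) J"
      and ne: "sym_monomial (insert r I0) \<rho>' \<noteq> sym_monomial (insert r I0) (\<sigma>(r := \<sigma> i))"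
    define \<rho> where "\<rho> = \<rho>'(i := \<rho>' r)"
    have "i \<notin> insert r I0" using I(2,3) assms(2,3) by auto
    then have \<rho>: "bij_betw \<rho> I J"
      using bij_betw_rename_point[OF \<rho>', of r i] I(5) unfolding \<rho>_def by simp
    have vals: "mono_value M (insert r I0) \<rho>' = M r (\<rho>' r) + mono_value M I0 \<rho>'"
      "mono_value M I \<rho> = M i (\<rho>' r) + mono_value M I0 \<rho>'"
      "mono_value M (insert r I0) (\<sigma>(r := \<sigma> i)) = M r (\<sigma> i) + mono_value M I0 \<sigma>"
      "mono_value M I \<sigma> = M i (\<sigma> i) + mono_value M I0 \<sigma>"
      using mono_value_insert[OF I(4,3)] mono_value_insert[OF I(4,2)]
        mono_value_fun_upd_insert[OF I(4,3)] mono_value_fun_upd_insert[OF I(4,2)]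
      unfolding \<rho>_def I(1) by blast+
    have monoms: "sym_monomial (insert r I0) \<rho>' = add_mset {r, \<rho>' r} (sym_monomial I0 \<rho>')"
      "sym_monomial I \<rho> = add_mset {i, \<rho>' r} (sym_monomial I0 \<rho>')"
      "sym_monomial (insert r I0) (\<sigma>(r := \<sigma> i)) = add_mset {r, \<sigma> i} (sym_monomial I0 \<sigma>)"
      "sym_monomial I \<sigma> = add_mset {i, \<sigma> i} (sym_monomial I0 \<sigma>)"
      using sym_monomial_insert[OF I(4,3)] sym_monomial_insert[OF I(4,2)]
        sym_monomial_fun_upd_insert[OF I(4,3)] sym_monomial_fun_upd_insert[OF I(4,2)]
      unfolding \<rho>_def I(1) by blast+
    have "\<rho> i = \<rho>' r" "\<rho>' r \<in> J" using \<rho>' by (simp_all add: \<rho>_def bij_betw_apply)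
    show "mono_value M (insert r I0) (\<sigma>(r := \<sigma> i)) < mono_value M (insert r I0) \<rho>'"
    proof (cases "sym_monomial I \<rho> = sym_monomial I \<sigma>")
      case True
      then have "\<rho> i \<noteq> \<sigma> i" using ne monoms \<open>\<rho> i = \<rho>' r\<close> by auto
      then have "M i (\<rho>' r) < M r (\<rho>' r)" using stable \<rho> True \<open>\<rho> i = \<rho>' r\<close> by metis
      moreover have "mono_value M I \<sigma> \<le> mono_value M I \<rho>"
        using \<sigma> \<rho> unfolding optimal_bij_def by blast
      ultimately show ?thesis using vals eq by linarith
    next
      case False
      then have "mono_value M I \<sigma> < mono_value M I \<rho>"
        using optimal_bij_strict[OF nonsing \<sigma> \<rho>] by simp
      moreover have "M i (\<rho>' r) \<le> M r (\<rho>' r)" using dom \<open>\<rho>' r \<in> J\<close> by blast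
      ultimately show ?thesis using vals eq by linarith
    qed
  qed
qed

lemma mono_value_relabel:
  assumes "inj_on h I"
  shows "mono_value M' (h ` I) (h \<circ> \<rho> \<circ> inv_into I h) = (\<Sum>i\<in>I. M' (h i) (h (\<rho> i)))"
  unfolding mono_value_def using assms by (simp add: sum.reindex)

lemma sym_monomial_relabel:
  assumes "finite I" "inj_on h I"
  shows "sym_monomial (h ` I) (h \<circ> \<rho> \<circ> inv_into I h) = image_mset (image h) (sym_monomial I \<rho>)"
proof -
  have "sym_monomial (h ` I) (h \<circ> \<rho> \<circ> inv_into I h) = image_mset (\<lambda>i. {h i, h (\<rho> i)}) (mset_set I)"
    unfolding sym_monomial_def image_mset_mset_set[OF assms(2), symmetric]
    using assms by (auto simp: multiset.map_comp comp_def intro: image_mset_cong)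
  then show ?thesis unfolding sym_monomial_def by (simp add: multiset.map_comp comp_def)
qed

lemma bij_betw_relabel:
  assumes "inj_on h (I \<union> J)" "bij_betw \<rho>' (h ` I) (h ` J)"
  shows "bij_betw (inv_into J h \<circ> \<rho>' \<circ> h) I J"
    and "\<And>i. i \<in> I \<Longrightarrow> h (inv_into J h (\<rho>' (h i))) = \<rho>' (h i)"
proof -
  have "bij_betw h I (h ` I)" "bij_betw h J (h ` J)"
    using inj_on_subset[OF assms(1)] by (simp_all add: inj_on_imp_bij_betw)
  then show "bij_betw (inv_into J h \<circ> \<rho>' \<circ> h) I J"
    using bij_betw_trans[OF assms(2) bij_betw_inv_into] bij_betw_trans by blast
  show "h (inv_into J h (\<rho>' (h i))) = \<rho>' (h i)" if "i \<in> I" for i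
    using that assms(2) by (simp add: bij_betw_apply f_inv_into_f)
qed

lemma not_sym_trop_singular_relabel:
  assumes "finite I" and h: "inj_on h (I \<union> J)"
    and nonsing: "\<not> sym_trop_singular M I J" and \<sigma>: "optimal_bij M I J \<sigma>"
    and le: "\<And>i j. i \<in> I \<Longrightarrow> j \<in> J \<Longrightarrow> M i j \<le> M' (h i) (h j)"
    and eq: "\<And>i. i \<in> I \<Longrightarrow> M' (h i) (h (\<sigma> i)) = M i (\<sigma> i)"
  shows "\<not> sym_trop_singular M' (h ` I) (h ` J)"
proof (rule not_sym_trop_singularI)
  have hI: "inj_on h I" using h by (rule inj_on_subset) blast
  have \<sigma>_bij: "bij_betw \<sigma> I J" using \<sigma> unfolding optimal_bij_def by blast
  show "bij_betw (h \<circ> \<sigma> \<circ> inv_into I h) (h ` I) (h ` J)"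
  proof -
    have "bij_betw h I (h ` I)" "bij_betw h J (h ` J)"
      using inj_on_subset[OF h] by (simp_all add: inj_on_imp_bij_betw)
    then show ?thesis
      using bij_betw_trans[OF bij_betw_inv_into bij_betw_trans[OF \<sigma>_bij]] by blast
  qed
  fix \<rho>' assume \<rho>': "bij_betw \<rho>' (h ` I) (h ` J)"
    and ne: "sym_monomial (h ` I) \<rho>' \<noteq> sym_monomial (h ` I) (h \<circ> \<sigma> \<circ> inv_into I h)"
  define \<rho> where "\<rho> = inv_into J h \<circ> \<rho>' \<circ> h"
  have \<rho>: "bij_betw \<rho> I J" and push: "\<And>i. i \<in> I \<Longrightarrow> h (\<rho> i) = \<rho>' (h i)"
    using bij_betw_relabel[OF h \<rho>'] unfolding \<rho>_def by auto
  have \<rho>'_eq: "\<rho>' k = (h \<circ> \<rho> \<circ> inv_into I h) k" if "k \<in> h ` I" for k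
    using that push hI by auto
  have "sym_monomial I \<rho> \<noteq> sym_monomial I \<sigma>"
  proof
    assume "sym_monomial I \<rho> = sym_monomial I \<sigma>"
    then have "sym_monomial (h ` I) (h \<circ> \<rho> \<circ> inv_into I h) = sym_monomial (h ` I) (h \<circ> \<sigma> \<circ> inv_into I h)"
      using sym_monomial_relabel[OF assms(1) hI] by simp
    moreover have "sym_monomial (h ` I) \<rho>' = sym_monomial (h ` I) (h \<circ> \<rho> \<circ> inv_into I h)"
      using assms(1) \<rho>'_eq by (intro sym_monomial_cong) auto
    ultimately show False using ne by simp
  qed
  then have "mono_value M I \<sigma> < mono_value M I \<rho>"
    by (rule optimal_bij_strict[OF nonsing \<sigma> \<rho>])
  also have "\<dots> \<le> (\<Sum>i\<in>I. M' (h i) (h (\<rho> i)))"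
    unfolding mono_value_def using le \<rho> by (intro sum_mono) (simp add: bij_betw_apply)
  also have "\<dots> = mono_value M' (h ` I) (h \<circ> \<rho> \<circ> inv_into I h)"
    by (rule mono_value_relabel[OF hI, symmetric])
  also have "\<dots> = mono_value M' (h ` I) \<rho>'"
    by (rule mono_value_cong) (simp add: \<rho>'_eq)
  finally show "mono_value M' (h ` I) (h \<circ> \<sigma> \<circ> inv_into I h) < mono_value M' (h ` I) \<rho>'"
    using mono_value_relabel[OF hI, of M' \<sigma>] eq unfolding mono_value_def by simp
qed

lemma not_sym_trop_singular_relabel_eq:
  assumes "finite I" "finite J" "card I = card J" "inj_on h (I \<union> J)" "\<not> sym_trop_singular M I J"
    and "\<And>i j. i \<in> I \<Longrightarrow> j \<in> J \<Longrightarrow> M' (h i) (h j) = M i j"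
  shows "\<not> sym_trop_singular M' (h ` I) (h ` J)"
proof -
  obtain \<sigma> where \<sigma>: "optimal_bij M I J \<sigma>" using ex_optimal_bij assms(1-3) by blast
  then have "\<sigma> i \<in> J" if "i \<in> I" for i
    using that unfolding optimal_bij_def by (blast dest: bij_betw_apply)
  then show ?thesis
    using not_sym_trop_singular_relabel[OF assms(1,4,5) \<sigma>] assms(6) by simp
qed

lemma mono_value_inv_into:
  assumes "bij_betw \<rho> I J" "\<And>i j. i \<in> I \<Longrightarrow> j \<in> J \<Longrightarrow> M i j = M j i"
  shows "mono_value M J (inv_into I \<rho>) = mono_value M I \<rho>"
proof -
  have "mono_value M J (inv_into I \<rho>) = (\<Sum>i\<in>I. M (\<rho> i) (inv_into I \<rho> (\<rho> i)))"
    unfolding mono_value_def by (rule sum.reindex_bij_betw[symmetric, OF assms(1)])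
  also have "\<dots> = mono_value M I \<rho>"
    unfolding mono_value_def
  proof (rule sum.cong[OF refl])
    fix i assume "i \<in> I"
    then have "inv_into I \<rho> (\<rho> i) = i" "\<rho> i \<in> J"
      using assms(1) by (auto simp: bij_betw_def)
    then show "M (\<rho> i) (inv_into I \<rho> (\<rho> i)) = M i (\<rho> i)" using assms(2)[of i "\<rho> i"] \<open>i \<in> I\<close> by simp
  qed
  finally show ?thesis .
qed

lemma sym_monomial_inv_into:
  assumes "finite I" "bij_betw \<rho> I J"
  shows "sym_monomial J (inv_into I \<rho>) = sym_monomial I \<rho>"
proof -
  have inj: "inj_on \<rho> I" using assms(2) by (rule bij_betw_imp_inj_on)
  have "mset_set J = image_mset \<rho> (mset_set I)"
    using image_mset_mset_set[OF inj] assms(2) by (simp add: bij_betw_def)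
  then have "sym_monomial J (inv_into I \<rho>) = image_mset (\<lambda>i. {\<rho> i, inv_into I \<rho> (\<rho> i)}) (mset_set I)"
    unfolding sym_monomial_def by (simp add: multiset.map_comp comp_def)
  also have "\<dots> = sym_monomial I \<rho>"
    unfolding sym_monomial_def using assms(1) inj by (intro image_mset_cong) auto
  finally show ?thesis .
qed

lemma sym_trop_singular_commute:
  assumes "finite I" "\<And>i j. i \<in> I \<Longrightarrow> j \<in> J \<Longrightarrow> M i j = M j i" "sym_trop_singular M I J"
  shows "sym_trop_singular M J I"
proof -
  obtain \<rho>1 \<rho>2 where \<rho>: "bij_betw \<rho>1 I J" "bij_betw \<rho>2 I J"
    "\<forall>\<rho>. bij_betw \<rho> I J \<longrightarrow> mono_value M I \<rho>1 \<le> mono_value M I \<rho>"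
    "mono_value M I \<rho>2 = mono_value M I \<rho>1" "sym_monomial I \<rho>1 \<noteq> sym_monomial I \<rho>2"
    using assms(3) unfolding sym_trop_singular_def by blast
  have "finite J" using \<rho>(1) assms(1) bij_betw_finite by blast
  have sym': "\<And>j i. j \<in> J \<Longrightarrow> i \<in> I \<Longrightarrow> M j i = M i j" using assms(2) by simp
  show ?thesis unfolding sym_trop_singular_def
  proof (intro exI conjI allI impI)
    show "bij_betw (inv_into I \<rho>1) J I" "bij_betw (inv_into I \<rho>2) J I"
      using \<rho>(1,2) by (simp_all add: bij_betw_inv_into)
    fix \<tau> assume \<tau>: "bij_betw \<tau> J I"
    have "mono_value M J (inv_into I \<rho>1) = mono_value M I \<rho>1"
      using \<rho>(1) assms(2) by (rule mono_value_inv_into)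
    also have "\<dots> \<le> mono_value M I (inv_into J \<tau>)"
      using \<rho>(3) bij_betw_inv_into[OF \<tau>] by blast
    also have "\<dots> = mono_value M J \<tau>"
      using \<tau> sym' by (rule mono_value_inv_into)
    finally show "mono_value M J (inv_into I \<rho>1) \<le> mono_value M J \<tau>" .
  next
    show "mono_value M J (inv_into I \<rho>2) = mono_value M J (inv_into I \<rho>1)"
      using mono_value_inv_into[OF \<rho>(1) assms(2)] mono_value_inv_into[OF \<rho>(2) assms(2)] \<rho>(4) by simp
    show "sym_monomial J (inv_into I \<rho>1) \<noteq> sym_monomial J (inv_into I \<rho>2)"
      using sym_monomial_inv_into[OF assms(1) \<rho>(1)] sym_monomial_inv_into[OF assms(1) \<rho>(2)] \<rho>(5)
      by simp
  qed
qed

lemma ex_not_sym_trop_singular_shrink: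
  assumes "finite I" "finite J" "card I = Suc k" "card J = Suc k" "\<not> sym_trop_singular M I J"
  obtains I' J' where "I' \<subseteq> I" "J' \<subseteq> J" "card I' = k" "card J' = k" "\<not> sym_trop_singular M I' J'"
proof -
  obtain \<sigma> where \<sigma>: "optimal_bij M I J \<sigma>" using ex_optimal_bij assms(1-4) by metis
  then have \<sigma>_bij: "bij_betw \<sigma> I J" unfolding optimal_bij_def by blast
  obtain i where i: "i \<in> I" using assms(3) by fastforce
  define I' where "I' = I - {i}"
  define J' where "J' = J - {\<sigma> i}"
  have I: "I = insert i I'" "i \<notin> I'" "finite I'" "J = insert (\<sigma> i) J'"
    using i \<sigma>_bij assms(1) unfolding I'_def J'_def by (auto simp: bij_betw_apply)
  have ext_bij: "bij_betw (\<tau>(i := \<sigma> i)) I J" if "bij_betw \<tau> I' J'" for \<tau>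
  proof -
    have "\<sigma> i \<notin> J'" unfolding J'_def by simp
    then show ?thesis using bij_betw_fun_upd_insert[OF that I(2)] I(1,4) by simp
  qed
  have ext_val: "mono_value M I (\<tau>(i := \<sigma> i)) = M i (\<sigma> i) + mono_value M I' \<tau>"
    and ext_monomial: "sym_monomial I (\<tau>(i := \<sigma> i)) = add_mset {i, \<sigma> i} (sym_monomial I' \<tau>)" for \<tau>
    unfolding I(1) using I(2,3) by (simp_all add: mono_value_fun_upd_insert sym_monomial_fun_upd_insert)
  have "\<not> sym_trop_singular M I' J'"
  proof
    assume "sym_trop_singular M I' J'"
    then obtain t1 t2 where t: "bij_betw t1 I' J'" "bij_betw t2 I' J'"
      "\<forall>\<rho>. bij_betw \<rho> I' J' \<longrightarrow> mono_value M I' t1 \<le> mono_value M I' \<rho>"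
      "mono_value M I' t2 = mono_value M I' t1" "sym_monomial I' t1 \<noteq> sym_monomial I' t2"
      unfolding sym_trop_singular_def by blast
    have "bij_betw \<sigma> I' J'"
      unfolding I'_def J'_def
      by (rule bij_betw_DiffI[OF \<sigma>_bij]) (use i \<sigma>_bij in \<open>auto simp: bij_betw_apply\<close>)
    then have "mono_value M I' t1 \<le> mono_value M I' \<sigma>" using t(3) by blast
    then have "mono_value M I (t1(i := \<sigma> i)) \<le> mono_value M I \<rho>" if "bij_betw \<rho> I J" for \<rho>
      using \<sigma> that ext_val[of t1] ext_val[of \<sigma>] unfolding optimal_bij_def by fastforce
    then have "sym_trop_singular M I J"
      unfolding sym_trop_singular_def using ext_bij[OF t(1)] ext_bij[OF t(2)] t(4,5)
      by (intro exI[of _ "t1(i := \<sigma> i)"] exI[of _ "t2(i := \<sigma> i)"]) (simp add: ext_val ext_monomial)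
    with assms(5) show False by contradiction
  qed
  moreover have "card I' = k" "card J' = k"
    using assms I i \<sigma>_bij unfolding I'_def J'_def by (simp_all add: bij_betw_apply)
  ultimately show ?thesis using that unfolding I'_def J'_def by blast
qed

definition has_nonsingular_minor :: "nat \<Rightarrow> (nat \<Rightarrow> nat \<Rightarrow> real) \<Rightarrow> nat \<Rightarrow> bool" where
  "has_nonsingular_minor n A r \<longleftrightarrow> (\<exists>I J. I \<subseteq> {..<n} \<and> J \<subseteq> {..<n} \<and>
     card I = r \<and> card J = r \<and> \<not> sym_trop_singular A I J)"

lemma has_nonsingular_minor_le: "has_nonsingular_minor n A r \<Longrightarrow> r \<le> n"
  unfolding has_nonsingular_minor_def by (metis card_lessThan card_mono finite_lessThan)

lemma has_nonsingular_minor_0: "has_nonsingular_minor n A 0"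
  unfolding has_nonsingular_minor_def sym_trop_singular_def sym_monomial_def
  by (intro exI[of _ "{}"]) simp

lemma has_nonsingular_minor_downward:
  assumes "has_nonsingular_minor n A r" "k \<le> r"
  shows "has_nonsingular_minor n A k"
  using assms
proof (induction r)
  case (Suc r)
  show ?case
  proof (cases "k = Suc r")
    case False
    obtain I J where IJ: "I \<subseteq> {..<n}" "J \<subseteq> {..<n}" "card I = Suc r" "card J = Suc r"
      "\<not> sym_trop_singular A I J"
      using Suc.prems(1) unfolding has_nonsingular_minor_def by blast
    then have "finite I" "finite J" by (auto intro: finite_subset)
    then obtain I' J' where "I' \<subseteq> I" "J' \<subseteq> J" "card I' = r" "card J' = r" "\<not> sym_trop_singular A I' J'"
      using ex_not_sym_trop_singular_shrink IJ(3-5) by metis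
    then have "has_nonsingular_minor n A r"
      unfolding has_nonsingular_minor_def using IJ(1,2) by blast
    then show ?thesis using Suc.IH False Suc.prems(2) by simp
  qed (use Suc.prems in simp)
qed simp

lemma sym_tropical_rank_eqI:
  assumes "has_nonsingular_minor n A r" "\<not> has_nonsingular_minor n A (Suc r)"
  shows "sym_tropical_rank n A = r"
  unfolding sym_tropical_rank_def has_nonsingular_minor_def[symmetric]
proof (rule Greatest_equality)
  show "has_nonsingular_minor n A r" by (fact assms(1))
  show "y \<le> r" if "has_nonsingular_minor n A y" for y
    using has_nonsingular_minor_downward[OF that, of "Suc r"] assms(2) by linarith
qed

lemma has_nonsingular_minor_sym_tropical_rank:
  "has_nonsingular_minor n A (sym_tropical_rank n A)"
  unfolding sym_tropical_rank_def has_nonsingular_minor_def[symmetric]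
  by (rule GreatestI_nat[of _ 0 n]) (simp_all add: has_nonsingular_minor_0 has_nonsingular_minor_le)

lemma not_has_nonsingular_minor_gt:
  "sym_tropical_rank n A < r \<Longrightarrow> \<not> has_nonsingular_minor n A r"
  unfolding sym_tropical_rank_def has_nonsingular_minor_def[symmetric]
  using Greatest_le_nat[of "has_nonsingular_minor n A" r n] has_nonsingular_minor_le by fastforce

lemma has_nonsingular_minor_aug:
  assumes "has_nonsingular_minor n A r"
  shows "has_nonsingular_minor (Suc n) (aug A) r"
proof -
  obtain I J where IJ: "I \<subseteq> {..<n}" "J \<subseteq> {..<n}" "card I = r" "card J = r" "\<not> sym_trop_singular A I J"
    using assms unfolding has_nonsingular_minor_def by blast
  then have "\<not> sym_trop_singular (aug A) (Suc ` I) (Suc ` J)"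
    by (intro not_sym_trop_singular_relabel_eq) (auto simp: aug_def intro: finite_subset)
  moreover have "Suc ` I \<subseteq> {..<Suc n}" "Suc ` J \<subseteq> {..<Suc n}" "card (Suc ` I) = r" "card (Suc ` J) = r"
    using IJ by (auto simp: card_image)
  ultimately show ?thesis unfolding has_nonsingular_minor_def by blast
qed

lemma has_nonsingular_minor_of_aug:
  assumes "I \<subseteq> {1..<Suc n}" "J \<subseteq> {1..<Suc n}" "card I = r" "card J = r"
    "\<not> sym_trop_singular (aug A) I J"
  shows "has_nonsingular_minor n A r"
proof -
  have pos: "0 < k" if "k \<in> I \<union> J" for k using that assms(1,2) by auto
  have inj: "inj_on (\<lambda>k. k - 1) (I \<union> J)"
  proof (rule inj_onI)
    fix x y assume "x \<in> I \<union> J" "y \<in> I \<union> J" "x - 1 = y - 1"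
    then show "x = y" using pos[of x] pos[of y] by linarith
  qed
  then have "inj_on (\<lambda>k. k - 1) I" "inj_on (\<lambda>k. k - 1) J" by (auto intro: inj_on_subset)
  then have "card ((\<lambda>k. k - 1) ` I) = r" "card ((\<lambda>k. k - 1) ` J) = r"
    using assms(3,4) by (simp_all add: card_image)
  moreover have "\<not> sym_trop_singular A ((\<lambda>k. k - 1) ` I) ((\<lambda>k. k - 1) ` J)"
    using assms by (intro not_sym_trop_singular_relabel_eq[OF _ _ _ inj, where M = "aug A"])
      (auto simp: aug_def intro: finite_subset)
  moreover have "(\<lambda>k. k - 1) ` I \<subseteq> {..<n}" "(\<lambda>k. k - 1) ` J \<subseteq> {..<n}"
    using assms(1,2) by (force simp: subset_iff)+
  ultimately show ?thesis unfolding has_nonsingular_minor_def by blast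
qed

lemma not_sym_trop_singular_avoid_zero_row:
  assumes "finite I" "finite J" "card I = card J" "i \<in> I" "i \<notin> J" "\<not> sym_trop_singular M I J"
    and zero: "\<And>j. j \<in> J \<Longrightarrow> M i j = 0"
    and nonneg: "\<And>k j. k \<in> R \<Longrightarrow> j \<in> J \<Longrightarrow> 0 \<le> M k j"
    and col: "\<And>j. j \<in> J \<Longrightarrow> \<exists>r\<in>R. r \<noteq> i \<and> M r j = 0"
  obtains r where "r \<in> R" "r \<notin> I" "\<not> sym_trop_singular M (insert r (I - {i})) J"
proof -
  obtain \<sigma> where \<sigma>: "optimal_bij M I J \<sigma>" using ex_optimal_bij assms(1-3) by blast
  then have \<sigma>_bij: "bij_betw \<sigma> I J" unfolding optimal_bij_def by blast
  then have \<sigma>J: "\<sigma> k \<in> J" if "k \<in> I" for k using that by (simp add: bij_betw_apply)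
  then obtain r where r: "r \<in> R" "r \<noteq> i" "M r (\<sigma> i) = 0" using col assms(4) by blast
  have "r \<notin> I"
  proof
    assume "r \<in> I"
    then have "0 < M r (\<sigma> i)"
      using optimal_bij_zero_row_pos[OF assms(6,1) \<sigma> assms(4)] r(1,2) zero nonneg \<sigma>J by blast
    with r(3) show False by simp
  qed
  moreover have "\<not> sym_trop_singular M (insert r (I - {i})) J"
  proof (rule not_sym_trop_singular_replace_row[OF assms(1,4) \<open>r \<notin> I\<close> assms(6) \<sigma>])
    show "M i j \<le> M r j" if "j \<in> J" for j using that zero nonneg r(1) by simp
    show "M r (\<sigma> i) = M i (\<sigma> i)" using r(3) zero \<sigma>J assms(4) by simp
    fix \<rho> assume "bij_betw \<rho> I J" "sym_monomial I \<rho> = sym_monomial I \<sigma>" "\<rho> i \<noteq> \<sigma> i"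
    then show "M i (\<rho> i) < M r (\<rho> i)"
      using sym_monomial_eq_cases[OF assms(1) _ assms(4)] \<sigma>J assms(5) by blast
  qed
  ultimately show ?thesis using that r(1) by blast
qed

lemma sym_monomial_eq_card_3_subset:
  assumes "card I = 3" "bij_betw \<sigma> I J" "bij_betw \<rho> I J" "sym_monomial I \<rho> = sym_monomial I \<sigma>"
    "i \<in> I" "\<rho> i \<noteq> \<sigma> i"
  shows "J \<subseteq> I"
proof -
  have fin: "finite I" using assms(1) card.infinite by fastforce
  have eq_cases: "\<rho> k = \<sigma> k \<or> (\<exists>k'\<in>I. \<sigma> k' = k \<and> \<rho> k = k')" if "k \<in> I" for k
    using sym_monomial_eq_cases[OF fin assms(4) that] .
  obtain x where x: "x \<in> I" "\<sigma> x = i" "\<rho> i = x" using eq_cases[OF assms(5)] assms(6) by blast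
  then have "x \<noteq> i" using assms(6) by auto
  obtain x' where I: "I = {i, x, x'}" "x' \<noteq> i" "x' \<noteq> x"
  proof -
    have "card (I - {i, x}) = 1" using assms(1,5) x(1) \<open>x \<noteq> i\<close> fin by (simp add: card_Diff_subset)
    then obtain x' where "I - {i, x} = {x'}" by (rule card_1_singletonE)
    then show thesis using that assms(5) x(1) by blast
  qed
  have inj: "inj_on \<rho> I" "inj_on \<sigma> I" using assms(2,3) by (simp_all add: bij_betw_imp_inj_on)
  have "\<rho> x \<in> I" using eq_cases[OF x(1)] x(2) assms(5) by auto
  moreover have "\<rho> x' \<in> I"
  proof (cases "\<rho> x' = \<sigma> x'")
    case True
    have "\<rho> i \<in> \<sigma> ` I" using assms(2,3,5) by (simp add: bij_betw_apply bij_betw_imp_surj_on)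
    moreover have "\<rho> i \<noteq> \<rho> x'" using inj(1) I assms(5) by (metis inj_on_contraD insertCI)
    ultimately have "\<rho> i = i" using I True assms(6) x(2) by auto
    then show ?thesis using x(3) \<open>x \<noteq> i\<close> by simp
  qed (use eq_cases I in auto)
  ultimately have "\<rho> ` I \<subseteq> I" using I x by auto
  then show ?thesis using assms(3) by (simp add: bij_betw_def)
qed

lemma subset_atLeastLessThan_1:
  assumes "J \<subseteq> {..<Suc n}" "0 \<notin> J"
  shows "J \<subseteq> {1..<Suc n}"
proof
  fix t assume "t \<in> J"
  then have "t \<noteq> 0" "t < Suc n" using assms by (metis, blast)
  then show "t \<in> {1..<Suc n}" by simp
qed

context
  fixes n :: nat and A :: "nat \<Rightarrow> nat \<Rightarrow> real"
  assumes sym: "symmetric_mat n A" and norm: "normalized n A"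
begin

lemma aug_nonneg: "i < Suc n \<Longrightarrow> j < Suc n \<Longrightarrow> 0 \<le> aug A i j"
  using norm unfolding normalized_def aug_def by auto

lemma aug_symmetric: "i < Suc n \<Longrightarrow> j < Suc n \<Longrightarrow> aug A i j = aug A j i"
  using sym unfolding symmetric_mat_def aug_def by auto

lemma aug_zero_in_column:
  assumes "0 < j" "j < Suc n"
  obtains r where "0 < r" "r < Suc n" "aug A r j = 0"
proof -
  have "j - 1 < n" using assms by simp
  then obtain i where "i < n" "A i (j - 1) = 0" using norm unfolding normalized_def by blast
  then show thesis using that[of "Suc i"] assms(1) by (simp add: aug_def)
qed

lemma has_nonsingular_minor_of_aug_zero_row:
  assumes "I \<subseteq> {..<Suc n}" "J \<subseteq> {..<Suc n}" "card I = r" "card J = r" "0 \<in> I" "0 \<notin> J"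
    and nonsing: "\<not> sym_trop_singular (aug A) I J"
  shows "has_nonsingular_minor n A r"
proof -
  have fin: "finite I" "finite J" using assms(1,2) by (auto intro: finite_subset)
  have zero: "aug A 0 j = 0" for j by (simp add: aug_def)
  have nonneg: "0 \<le> aug A k j" if "k \<in> {1..<Suc n}" "j \<in> J" for k j
    using that assms(2) aug_nonneg by auto
  have col: "\<exists>k\<in>{1..<Suc n}. k \<noteq> 0 \<and> aug A k j = 0" if "j \<in> J" for j
  proof -
    have "j \<noteq> 0" using that assms(6) by metis
    moreover have "j < Suc n" using that assms(2) by blast
    ultimately have "0 < j" "j < Suc n" by simp_all
    then obtain k where "0 < k" "k < Suc n" "aug A k j = 0" by (rule aug_zero_in_column)
    then show ?thesis by auto
  qed
  have "card I = card J" using assms(3,4) by simp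
  obtain k where k: "k \<in> {1..<Suc n}" "k \<notin> I" "\<not> sym_trop_singular (aug A) (insert k (I - {0})) J"
    by (rule not_sym_trop_singular_avoid_zero_row[OF fin \<open>card I = card J\<close> assms(5,6) nonsing zero nonneg col])
  show ?thesis
  proof (rule has_nonsingular_minor_of_aug[OF _ _ _ assms(4) k(3)])
    show "J \<subseteq> {1..<Suc n}" using assms(2,6) by (rule subset_atLeastLessThan_1)
    have "I - {0} \<subseteq> {1..<Suc n}" using assms(1) by (intro subset_atLeastLessThan_1) auto
    then show "insert k (I - {0}) \<subseteq> {1..<Suc n}" using k(1) by blast
    have "0 < r" using assms(3,5) fin by (auto simp: card_gt_0_iff)
    then show "card (insert k (I - {0})) = r" using k(2) fin assms(3,5) by simp
  qed
qed

lemma has_nonsingular_minor_of_aug_zero_col: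
  assumes "I \<subseteq> {..<Suc n}" "J \<subseteq> {..<Suc n}" "card I = r" "card J = r" "0 \<notin> I" "0 \<in> J"
    and nonsing: "\<not> sym_trop_singular (aug A) I J"
  shows "has_nonsingular_minor n A r"
proof -
  have "finite J" using assms(2) by (rule finite_subset) simp
  then have "\<not> sym_trop_singular (aug A) J I"
    using sym_trop_singular_commute[OF \<open>finite J\<close>, where M = "aug A" and J = I] nonsing
      aug_symmetric assms(1,2) by blast
  then show ?thesis using has_nonsingular_minor_of_aug_zero_row assms by blast
qed

lemma has_nonsingular_minor_of_aug_relabel_zero:
  assumes IJ: "I \<subseteq> {..<Suc n}" "J \<subseteq> I" "card I = 3" "0 \<in> J"
    and nonsing: "\<not> sym_trop_singular (aug A) I J" and \<sigma>: "optimal_bij (aug A) I J \<sigma>"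
    and r: "0 < r" "r < Suc n" "r \<notin> I" "aug A r (\<sigma> 0) = 0"
    and x: "x \<in> I" "x \<noteq> 0" "\<sigma> x = 0" "aug A r x = 0"
  shows "has_nonsingular_minor n A 3"
proof -
  have fin: "finite I" using IJ(3) card.infinite by fastforce
  have \<sigma>_bij: "bij_betw \<sigma> I J" using \<sigma> unfolding optimal_bij_def by blast
  have "0 \<in> I" using IJ(2,4) by blast
  define h where "h k = (if k = 0 then r else k)" for k
  have "I \<union> J = I" using IJ(2) by blast
  have inj: "inj_on h (I \<union> J)"
    unfolding \<open>I \<union> J = I\<close> h_def using r(3) by (auto intro!: inj_onI split: if_splits)
  have lt: "i < Suc n" if "i \<in> I" for i using that IJ(1) by blast
  have ns: "\<not> sym_trop_singular (aug A) (h ` I) (h ` J)"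
  proof (rule not_sym_trop_singular_relabel[OF fin inj nonsing \<sigma>])
    show "aug A i j \<le> aug A (h i) (h j)" if "i \<in> I" "j \<in> J" for i j
    proof (cases "i = 0 \<or> j = 0")
      case True
      have "h i < Suc n" "h j < Suc n" using that IJ(2) lt r(2) by (auto simp: h_def)
      then show ?thesis using True aug_nonneg by (auto simp: aug_def)
    qed (simp add: h_def)
    show "aug A (h i) (h (\<sigma> i)) = aug A i (\<sigma> i)" if "i \<in> I" for i
    proof -
      have "\<sigma> i = 0 \<longleftrightarrow> i = x"
        using that x(1,3) inj_onD[OF bij_betw_imp_inj_on[OF \<sigma>_bij], of i x] by auto
      moreover have "aug A x r = aug A r x" using aug_symmetric lt x(1) r(2) by blast
      ultimately show ?thesis using r(4) x(2,4) by (auto simp: h_def aug_def)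
    qed
  qed
  have sub: "h ` I \<subseteq> {1..<Suc n}" "h ` J \<subseteq> {1..<Suc n}"
    using r(1,2) IJ(1,2) lt by (auto simp: h_def)
  have "inj_on h I" "inj_on h J" using inj_on_subset[OF inj] by blast+
  then have card: "card (h ` I) = 3" "card (h ` J) = 3"
    using IJ(3) bij_betw_same_card[OF \<sigma>_bij] by (simp_all add: card_image)
  show ?thesis by (rule has_nonsingular_minor_of_aug[OF sub card ns])
qed

lemma aug_replacement_row:
  assumes "I \<subseteq> {..<Suc n}" "J \<subseteq> {..<Suc n}" "finite I" "0 \<in> I"
    and nonsing: "\<not> sym_trop_singular (aug A) I J" and \<sigma>: "optimal_bij (aug A) I J \<sigma>"
    and "0 < \<sigma> 0"
  obtains r where "0 < r" "r < Suc n" "r \<notin> I" "aug A r (\<sigma> 0) = 0"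
proof -
  have \<sigma>_bij: "bij_betw \<sigma> I J" using \<sigma> unfolding optimal_bij_def by blast
  have lt: "i < Suc n" "\<sigma> i < Suc n" if "i \<in> I" for i
    using that assms(1,2) bij_betw_apply[OF \<sigma>_bij that] by auto
  obtain r where r: "0 < r" "r < Suc n" "aug A r (\<sigma> 0) = 0"
    using aug_zero_in_column[OF assms(7) lt(2)[OF assms(4)]] by blast
  have "r \<notin> I"
  proof
    assume "r \<in> I"
    moreover have "aug A 0 j = 0" for j by (simp add: aug_def)
    ultimately have "0 < aug A r (\<sigma> 0)"
      using optimal_bij_zero_row_pos[OF nonsing assms(3) \<sigma> assms(4)] r(1) aug_nonneg lt by blast
    with r(3) show False by simp
  qed
  with r that show ?thesis by blast
qed

lemma has_nonsingular_minor_of_aug_replace_zero_row: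
  assumes IJ: "I \<subseteq> {..<Suc n}" "J \<subseteq> {..<Suc n}" "card I = 3" "card J = 3" "0 \<in> I" "0 \<in> J"
    and nonsing: "\<not> sym_trop_singular (aug A) I J" and \<sigma>: "optimal_bij (aug A) I J \<sigma>"
    and r: "0 < r" "r < Suc n" "r \<notin> I" "aug A r (\<sigma> 0) = 0"
    and stable: "\<And>\<rho>. bij_betw \<rho> I J \<Longrightarrow> sym_monomial I \<rho> = sym_monomial I \<sigma> \<Longrightarrow> \<rho> 0 \<noteq> \<sigma> 0 \<Longrightarrow>
      0 < aug A r (\<rho> 0)"
  shows "has_nonsingular_minor n A 3"
proof -
  have fin: "finite I" using IJ(3) card.infinite by fastforce
  have zero: "aug A 0 j = 0" for j by (simp add: aug_def)
  have "\<not> sym_trop_singular (aug A) (insert r (I - {0})) J"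
  proof (rule not_sym_trop_singular_replace_row[OF fin IJ(5) r(3) nonsing \<sigma>])
    show "aug A 0 j \<le> aug A r j" if "j \<in> J" for j
      using that IJ(2) aug_nonneg[OF r(2)] zero by auto
    show "aug A r (\<sigma> 0) = aug A 0 (\<sigma> 0)" using r(4) zero by simp
    show "aug A 0 (\<rho> 0) < aug A r (\<rho> 0)"
      if "bij_betw \<rho> I J" "sym_monomial I \<rho> = sym_monomial I \<sigma>" "\<rho> 0 \<noteq> \<sigma> 0" for \<rho>
      using stable[OF that] zero by simp
  qed
  moreover have "insert r (I - {0}) \<subseteq> {..<Suc n}" using r(2) IJ(1) by blast
  moreover have "card (insert r (I - {0})) = 3" using r(3) fin IJ(3,5) by simp
  moreover have "0 \<notin> insert r (I - {0})" using r(1) by simp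
  ultimately show ?thesis
    by (intro has_nonsingular_minor_of_aug_zero_col[OF _ IJ(2) _ IJ(4) _ IJ(6)])
qed

lemma has_nonsingular_minor_of_aug_zero_row_col:
  assumes IJ: "I \<subseteq> {..<Suc n}" "J \<subseteq> {..<Suc n}" "card I = 3" "card J = 3" "0 \<in> I" "0 \<in> J"
    and nonsing: "\<not> sym_trop_singular (aug A) I J"
  shows "has_nonsingular_minor n A 3"
proof -
  have fin: "finite I" "finite J" using IJ(1,2) by (auto intro: finite_subset)
  moreover have "card I = card J" using IJ(3,4) by simp
  ultimately obtain \<sigma> where \<sigma>: "optimal_bij (aug A) I J \<sigma>" by (metis ex_optimal_bij)
  then have \<sigma>_bij: "bij_betw \<sigma> I J" unfolding optimal_bij_def by blast
  have "card (I - {0}) = 2" using IJ(3,5) fin(1) by simp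
  then have "I - {0} \<noteq> {}" by (metis card.empty zero_neq_numeral)
  then obtain k where k: "k \<in> I" "k \<noteq> 0" by blast
  have "aug A 0 j = 0" "aug A k 0 = 0" for j by (simp_all add: aug_def)
  moreover have "0 \<le> aug A k (\<sigma> k)"
    using aug_nonneg k(1) IJ(1,2) bij_betw_apply[OF \<sigma>_bij k(1)] by blast
  ultimately have "0 < \<sigma> 0"
    using optimal_bij_zero_row_pos[OF nonsing fin(1) \<sigma> IJ(5) k] by (metis gr0I less_irrefl)
  then obtain r where r: "0 < r" "r < Suc n" "r \<notin> I" "aug A r (\<sigma> 0) = 0"
    using aug_replacement_row[OF IJ(1,2) fin(1) IJ(5) nonsing \<sigma>] by blast
  \<comment> \<open>Either row 0 can be replaced by row r, or a second bijection with the monomial of \<sigma>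
     forces the minor to be principal and index 0 is replaced by r in rows and columns.\<close>
  show ?thesis
  proof (cases "\<exists>\<rho>. bij_betw \<rho> I J \<and> sym_monomial I \<rho> = sym_monomial I \<sigma> \<and> \<rho> 0 \<noteq> \<sigma> 0 \<and>
      aug A r (\<rho> 0) \<le> 0")
    case True
    then obtain \<rho> where \<rho>: "bij_betw \<rho> I J" "sym_monomial I \<rho> = sym_monomial I \<sigma>" "\<rho> 0 \<noteq> \<sigma> 0"
      "aug A r (\<rho> 0) \<le> 0" by blast
    obtain x where x: "x \<in> I" "\<sigma> x = 0" "\<rho> 0 = x"
      using sym_monomial_eq_cases[OF fin(1) \<rho>(2) IJ(5)] \<rho>(3) by blast
    then have "x \<noteq> 0" using \<open>0 < \<sigma> 0\<close> by (metis less_irrefl)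
    have "aug A r x = 0" using \<rho>(4) x(1,3) aug_nonneg[OF r(2)] IJ(1) by fastforce
    moreover have "J \<subseteq> I"
      by (rule sym_monomial_eq_card_3_subset[OF IJ(3) \<sigma>_bij \<rho>(1,2) IJ(5) \<rho>(3)])
    ultimately show ?thesis
      by (intro has_nonsingular_minor_of_aug_relabel_zero[OF IJ(1) _ IJ(3,6) nonsing \<sigma> r
          x(1) \<open>x \<noteq> 0\<close> x(2)])
  next
    case False
    then show ?thesis
      by (intro has_nonsingular_minor_of_aug_replace_zero_row[OF IJ nonsing \<sigma> r]) force
  qed
qed

lemma has_nonsingular_minor_of_aug_3:
  assumes "has_nonsingular_minor (Suc n) (aug A) 3"
  shows "has_nonsingular_minor n A 3"
proof -
  obtain I J where IJ: "I \<subseteq> {..<Suc n}" "J \<subseteq> {..<Suc n}" "card I = 3" "card J = 3"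
    and nonsing: "\<not> sym_trop_singular (aug A) I J"
    using assms unfolding has_nonsingular_minor_def by blast
  consider "0 \<in> I" "0 \<in> J" | "0 \<in> I" "0 \<notin> J" | "0 \<notin> I" "0 \<in> J" | "0 \<notin> I" "0 \<notin> J"
    by blast
  then show ?thesis
  proof cases
    case 1
    then show ?thesis using has_nonsingular_minor_of_aug_zero_row_col[OF IJ _ _ nonsing] by blast
  next
    case 2
    then show ?thesis using has_nonsingular_minor_of_aug_zero_row[OF IJ _ _ nonsing] by blast
  next
    case 3
    then show ?thesis using has_nonsingular_minor_of_aug_zero_col[OF IJ _ _ nonsing] by blast
  next
    case 4
    then have "I \<subseteq> {1..<Suc n}" "J \<subseteq> {1..<Suc n}"
      using IJ(1,2) subset_atLeastLessThan_1 by blast+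
    then show ?thesis using has_nonsingular_minor_of_aug IJ(3,4) nonsing by blast
  qed
qed

lemma sym_tropical_rank_aug_2:
  assumes "sym_tropical_rank n A = 2"
  shows "sym_tropical_rank (Suc n) (aug A) = 2"
proof (rule sym_tropical_rank_eqI)
  show "has_nonsingular_minor (Suc n) (aug A) 2"
    using has_nonsingular_minor_sym_tropical_rank[of n A] assms by (simp add: has_nonsingular_minor_aug)
  have "\<not> has_nonsingular_minor n A 3" using not_has_nonsingular_minor_gt[of n A 3] assms by simp
  then show "\<not> has_nonsingular_minor (Suc n) (aug A) (Suc 2)"
    using has_nonsingular_minor_of_aug_3 by auto
qed

end

theorem lemma5:
  fixes n :: nat and A :: "nat \<Rightarrow> nat \<Rightarrow> real"
  assumes "symmetric_mat n A" and "normalized n A"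
  shows "(sym_tropical_rank n A = 2 \<longrightarrow> sym_tropical_rank (n + 1) (aug A) = 2) \<and>
         (sym_kapranov_rank n A = 2 \<longrightarrow> sym_kapranov_rank (n + 1) (aug A) = 2)"
proof (intro conjI impI)
  assume "sym_tropical_rank n A = 2"
  then show "sym_tropical_rank (n + 1) (aug A) = 2"
    using sym_tropical_rank_aug_2[OF assms] by simp
next
  assume rank: "sym_kapranov_rank n A = 2"
  then have "0 < n" using sym_kapranov_rank_0[of A] by (cases n) simp_all
  then show "sym_kapranov_rank (n + 1) (aug A) = 2"
    using sym_kapranov_rank_aug[OF assms] rank by simp
qed

end
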